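(* Let sampling data $\{(\mathrm{i}\omega_i, H_i)\}_{i=1}^{N}$ be given, with $\omega_i \in \mathbb{R}$ and $H_i \in \mathbb{C}^{n_o \times n_i}$, closed under conjugation (if $\mathrm{i}\omega_k$ is a sampling frequency then so is $-\mathrm{i}\omega_k$, and the datum at $-\mathrm{i}\omega_k$ is $\overline{H_k}$), and weights $\rho_i > 0$ equal for complex conjugate pairs of sampling frequencies. For real matrices $\hat{E}, \hat{A} \in \mathbb{R}^{r\times r}$, $\hat{B} \in \mathbb{R}^{r \times n_i}$, $\hat{C} \in \mathbb{R}^{n_o \times r}$ let $\hat{H}(s) = \hat{C}(s\hat{E} - \hat{A})^{-1}\hat{B}$ and $\mathcal{J}(\hat{H}) = \sum_{i=1}^{N} \rho_i \|H_i - \hat{H}(\mathrm{i}\omega_i)\|_F^2$. Let $\hat{H}(s) = \sum_{j=1}^{r} \frac{c_j b_j^{*}}{s - \lambda_j}$ (with $c_j = \hat{C}\hat{T}e_j$, $b_j = \hat{B}^{T}\hat{S}e_j$ for invertible $\hat{T},\hat{S}$ with $\hat{S}^*\hat{E}\hat{T} = I$, $\hat{S}^*\hat{A}\hat{T} = \operatorname{diag}(\lambda_1,\dots,\lambda_r)$) have pairwise distinct poles and be a local minimizer of $\mathcal{J}$. Define \[ G(s) = \sum_{i=1}^{N} \rho_i \frac{H_i}{s - \mathrm{i}\omega_i}, \qquad \hat{G}(s) = \sum_{i=1}^{N} \rho_i \frac{\hat{H}(\mathrm{i}\omega_i)}{s - \mathrm{i}\omega_i}. \] Then for $k = 1,\dots,r$: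 \[ G(-\overline{\lambda_k}) b_k = \hat{G}(-\overline{\lambda_k}) b_k, \qquad c_k^{*} G(-\overline{\lambda_k}) = c_k^{*} \hat{G}(-\overline{\lambda_k}), \qquad c_k^{*} G'(-\overline{\lambda_k}) b_k = c_k^{*} \hat{G}'(-\overline{\lambda_k}) b_k. \]
   Context: $\|\cdot\|_F$ is the Frobenius norm, $(\cdot)^*$ the conjugate transpose, $e_j$ the $j$th standard unit vector, $G'$ and $\hat{G}'$ derivatives with respect to $s$. The local minimum is with respect to the real matrices $\hat{E},\hat{A},\hat{B},\hat{C}$ (with $r$ fixed), among those for which $\hat{E}$ is invertible and $\mathrm{i}\omega_i\hat{E} - \hat{A}$ is invertible at all sampling frequencies. *)

theory Defs
  imports "HOL-Analysis.Analysis" "Jordan_Normal_Form.Schur_Decomposition"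
    "Jordan_Normal_Form.Gauss_Jordan_Elimination"
begin

definition cplx :: "real mat \<Rightarrow> complex mat" where
  "cplx M = map_mat complex_of_real M"

definition minv :: "complex mat \<Rightarrow> complex mat" where
  "minv M = the (mat_inverse M)"

definition tf :: "real mat \<Rightarrow> real mat \<Rightarrow> real mat \<Rightarrow> real mat \<Rightarrow> complex \<Rightarrow> complex mat" where
  "tf E A B C s = cplx C * minv (s \<cdot>\<^sub>m cplx E - cplx A) * cplx B"

definition frob_sq :: "complex mat \<Rightarrow> real" where
  "frob_sq M = (\<Sum>i<dim_row M. \<Sum>j<dim_col M. (cmod (M $$ (i,j)))\<^sup>2)"

definition rfrob_sq :: "real mat \<Rightarrow> real" where
  "rfrob_sq M = (\<Sum>i<dim_row M. \<Sum>j<dim_col M. (M $$ (i,j))\<^sup>2)"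

definition Jcost :: "nat \<Rightarrow> (nat \<Rightarrow> real) \<Rightarrow> (nat \<Rightarrow> complex mat) \<Rightarrow> (nat \<Rightarrow> real)
   \<Rightarrow> real mat \<Rightarrow> real mat \<Rightarrow> real mat \<Rightarrow> real mat \<Rightarrow> real" where
  "Jcost N \<omega> H \<rho> E A B C =
     (\<Sum>i<N. \<rho> i * frob_sq (H i - tf E A B C (\<i> * complex_of_real (\<omega> i))))"

definition admissible :: "nat \<Rightarrow> (nat \<Rightarrow> real) \<Rightarrow> nat \<Rightarrow> nat \<Rightarrow> nat
   \<Rightarrow> real mat \<Rightarrow> real mat \<Rightarrow> real mat \<Rightarrow> real mat \<Rightarrow> bool" where
  "admissible N \<omega> r ni no E A B C \<longleftrightarrow>
     E \<in> carrier_mat r r \<and> A \<in> carrier_mat r r \<and> B \<in> carrier_mat r ni \<and> C \<in> carrier_mat no r \<and>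
     invertible_mat E \<and>
     (\<forall>i<N. invertible_mat ((\<i> * complex_of_real (\<omega> i)) \<cdot>\<^sub>m cplx E - cplx A))"

definition local_minimizer :: "nat \<Rightarrow> (nat \<Rightarrow> real) \<Rightarrow> (nat \<Rightarrow> complex mat) \<Rightarrow> (nat \<Rightarrow> real)
   \<Rightarrow> nat \<Rightarrow> nat \<Rightarrow> nat \<Rightarrow> real mat \<Rightarrow> real mat \<Rightarrow> real mat \<Rightarrow> real mat \<Rightarrow> bool" where
  "local_minimizer N \<omega> H \<rho> r ni no E A B C \<longleftrightarrow>
     admissible N \<omega> r ni no E A B C \<and>
     (\<exists>\<epsilon>>0. \<forall>E' A' B' C'. admissible N \<omega> r ni no E' A' B' C' \<and>
        rfrob_sq (E' - E) + rfrob_sq (A' - A) + rfrob_sq (B' - B) + rfrob_sq (C' - C) < \<epsilon>\<^sup>2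
        \<longrightarrow> Jcost N \<omega> H \<rho> E A B C \<le> Jcost N \<omega> H \<rho> E' A' B' C')"

definition Gfun :: "nat \<Rightarrow> nat \<Rightarrow> nat \<Rightarrow> (nat \<Rightarrow> real) \<Rightarrow> (nat \<Rightarrow> complex mat) \<Rightarrow> (nat \<Rightarrow> real)
   \<Rightarrow> complex \<Rightarrow> complex mat" where
  "Gfun no ni N \<omega> M \<rho> s =
     mat no ni (\<lambda>(p,q). \<Sum>i<N. (complex_of_real (\<rho> i) / (s - \<i> * complex_of_real (\<omega> i))) * M i $$ (p,q))"

definition mat_deriv :: "nat \<Rightarrow> nat \<Rightarrow> (complex \<Rightarrow> complex mat) \<Rightarrow> complex \<Rightarrow> complex mat" where
  "mat_deriv m n F s = mat m n (\<lambda>(p,q). deriv (\<lambda>z. F z $$ (p,q)) s)"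

end

theory Submission
  imports Defs
begin

(* At a local minimizer, J is stationary along every admissible real curve through (E, A, B, C).
   Moving one entry of C or B changes the transfer function linearly, and moving one entry of A
   changes the resolvent by a Sherman-Morrison rank-one term; in each case the derivative of J at
   0 is -2 Re of a weighted Frobenius pairing of the residuals H_i - Hhat(i w_i) with the direction
   of motion. Conjugate symmetry of the data makes these pairings real, so they vanish, and by
   linearity they vanish for every complex direction. In modal coordinates the resolvent is
   (s E - A)^-1 = T diag(1/(s - lam_j)) S^*, so directions built from the k-th left and right
   eigenvectors turn the gradient conditions for C, B and A into the three interpolation
   conditions; they hold at -conj(lam_k) because conj(1/(i w - lam_k)) = 1/(-conj(lam_k) - i w). *)

lemma index_mult_mat_sum:
  assumes "X \<in> carrier_mat m n" "Y \<in> carrier_mat n k" "i < m" "j < k"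
  shows "(X * Y) $$ (i,j) = (\<Sum>l<n. X $$ (i,l) * Y $$ (l,j))"
  using assms by (auto simp: scalar_prod_def lessThan_atLeast0 intro!: sum.cong)

lemma assoc_mult_mat_dims:
  "dim_col X = dim_row Y \<Longrightarrow> dim_col Y = dim_row Z \<Longrightarrow> X * Y * Z = X * (Y * Z)"
  by (rule assoc_mult_mat[OF carrier_matI carrier_matI carrier_matI]) auto

lemma smult_mult_smult_mat:
  fixes A B :: "'a :: comm_semiring_0 mat"
  assumes "A \<in> carrier_mat m n" "B \<in> carrier_mat n l"
  shows "(x \<cdot>\<^sub>m A) * (y \<cdot>\<^sub>m B) = (x * y) \<cdot>\<^sub>m (A * B)"
  using assms by (intro eq_matI)
    (auto simp: mult_smult_assoc_mat[OF assms(1) smult_carrier_mat[OF assms(2)]]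
      mult_smult_distrib[OF assms] mult.assoc)

lemma sum_swap3:
  "(\<Sum>y\<in>B. \<Sum>u\<in>C. \<Sum>v\<in>D. f y u v) = (\<Sum>u\<in>C. \<Sum>v\<in>D. \<Sum>y\<in>B. f y u v)"
  by (subst sum.swap) (simp add: sum.swap[of _ B])

lemma sum_swap_pairs:
  "(\<Sum>x\<in>A. \<Sum>y\<in>B. \<Sum>u\<in>C. \<Sum>v\<in>D. f x y u v) = (\<Sum>u\<in>C. \<Sum>v\<in>D. \<Sum>x\<in>A. \<Sum>y\<in>B. f x y u v)"
  by (simp add: sum_swap3[where B = B] sum_swap3[where B = A])

lemma sum_cnj_involution:
  fixes f :: "nat \<Rightarrow> complex"
  assumes \<sigma>: "\<forall>i<N. \<sigma> i < N \<and> \<sigma> (\<sigma> i) = i" and f: "\<forall>i<N. f (\<sigma> i) = cnj (f i)"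
  shows "cnj (\<Sum>i<N. f i) = (\<Sum>i<N. f i)"
proof -
  have "bij_betw \<sigma> {..<N} {..<N}"
    by (rule bij_betw_byWitness[where f' = \<sigma>]) (use \<sigma> in auto)
  then have "(\<Sum>i<N. f i) = (\<Sum>i<N. f (\<sigma> i))"
    by (simp add: sum.reindex_bij_betw)
  also have "\<dots> = cnj (\<Sum>i<N. f i)" using f by simp
  finally show ?thesis ..
qed

lemma exists_radius_one_minus_ne_0:
  fixes \<beta> :: "nat \<Rightarrow> complex"
  shows "\<exists>d>0. \<forall>t i. \<bar>t\<bar> < d \<longrightarrow> i < N \<longrightarrow> 1 - complex_of_real t * \<beta> i \<noteq> 0"
proof (intro exI conjI allI impI)
  let ?d = "1 / (1 + (\<Sum>i<N. cmod (\<beta> i)))"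
  show "?d > 0" by (simp add: add_pos_nonneg sum_nonneg)
  fix t :: real and i assume t: "\<bar>t\<bar> < ?d" and i: "i < N"
  show "1 - complex_of_real t * \<beta> i \<noteq> 0"
  proof
    assume "1 - complex_of_real t * \<beta> i = 0"
    then have "1 = \<bar>t\<bar> * cmod (\<beta> i)"
      by (metis eq_iff_diff_eq_0 norm_mult norm_of_real norm_one)
    also have "\<dots> \<le> \<bar>t\<bar> * (1 + (\<Sum>i<N. cmod (\<beta> i)))"
      using member_le_sum[of i "{..<N}" "\<lambda>i. cmod (\<beta> i)"] i by (intro mult_left_mono) auto
    also have "\<dots> < 1"
      using t by (simp add: pos_less_divide_eq add_pos_nonneg sum_nonneg)
    finally show False by simp
  qed
qed

lemma cplx_carrier_iff [simp]: "cplx M \<in> carrier_mat n m \<longleftrightarrow> M \<in> carrier_mat n m"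
  by (auto simp: cplx_def)

lemma cplx_dim [simp]: "dim_row (cplx M) = dim_row M" "dim_col (cplx M) = dim_col M"
  by (auto simp: cplx_def)

lemma index_cplx [simp]: "i < dim_row M \<Longrightarrow> j < dim_col M \<Longrightarrow> cplx M $$ (i,j) = of_real (M $$ (i,j))"
  by (auto simp: cplx_def)

lemma cplx_add_smult:
  assumes "M \<in> carrier_mat n m" "D \<in> carrier_mat n m"
  shows "cplx (M + t \<cdot>\<^sub>m D) = cplx M + of_real t \<cdot>\<^sub>m cplx D"
  using assms by (intro eq_matI) auto

lemma cnj_cplx [simp]: "map_mat cnj (cplx M) = cplx M"
  by (intro eq_matI) auto

interpretation cnj: semiring_hom cnj
  by unfold_locales auto

lemma minv_correct:
  assumes M: "M \<in> carrier_mat n n" and inv: "invertible_mat M"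
  shows "minv M \<in> carrier_mat n n" "M * minv M = 1\<^sub>m n" "minv M * M = 1\<^sub>m n"
proof -
  from inv obtain Z where MZ: "M * Z = 1\<^sub>m n" and ZM: "Z * M = 1\<^sub>m (dim_row Z)"
    using M unfolding invertible_mat_def inverts_mat_def by auto
  have "Z \<in> carrier_mat n n"
    using MZ ZM M by (metis carrier_matD(2) carrier_matI index_mult_mat(2,3) index_one_mat(2,3))
  then have "M \<in> Units (ring_mat TYPE(complex) n undefined)"
    using M MZ ZM unfolding Units_def by (auto simp: ring_mat_simps)
  then obtain Z' where "mat_inverse M = Some Z'"
    using mat_inverse(1)[OF M] by fastforce
  with mat_inverse(2)[OF M this]
  show "minv M \<in> carrier_mat n n" "M * minv M = 1\<^sub>m n" "minv M * M = 1\<^sub>m n"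
    unfolding minv_def by auto
qed

lemma minv_eqI:
  fixes M Z :: "complex mat"
  assumes M: "M \<in> carrier_mat n n" and Z: "Z \<in> carrier_mat n n" and MZ: "M * Z = 1\<^sub>m n"
  shows "invertible_mat M" "minv M = Z"
proof -
  have ZM: "Z * M = 1\<^sub>m n" using mat_mult_left_right_inverse[OF M Z MZ] .
  show inv: "invertible_mat M"
    using M Z MZ ZM unfolding invertible_mat_def inverts_mat_def by auto
  note minv = minv_correct[OF M inv]
  have "minv M = minv M * (M * Z)" using minv(1) MZ by simp
  also have "\<dots> = (minv M * M) * Z" using minv(1) M Z by simp
  finally show "minv M = Z" using minv(3) Z by simp
qed

lemma minv_cnj:
  assumes M: "M \<in> carrier_mat n n" and inv: "invertible_mat M"
  shows "minv (map_mat cnj M) = map_mat cnj (minv M)"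
proof -
  note minv = minv_correct[OF M inv]
  have "map_mat cnj M * map_mat cnj (minv M) = 1\<^sub>m n"
    using cnj.mat_hom_mult[OF M minv(1)] minv(2) cnj.mat_hom_one by simp
  then show ?thesis using minv(1) M by (intro minv_eqI) auto
qed

lemma mat_adjoint_dim [simp]:
  "dim_row (mat_adjoint M) = dim_col M" "dim_col (mat_adjoint M) = dim_row M"
  by (auto simp: mat_adjoint_def)

lemma index_mat_adjoint [simp]:
  "i < dim_col M \<Longrightarrow> j < dim_row M \<Longrightarrow> mat_adjoint M $$ (i,j) = cnj (M $$ (j,i))"
  by (auto simp: mat_adjoint_def mat_of_rows_def)

lemma dim_mat_diag [simp]: "dim_row (mat_diag n f) = n" "dim_col (mat_diag n f) = n"
  by (auto simp: mat_diag_def)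

lemma mat_diag_cong: "(\<And>j. j < n \<Longrightarrow> f j = g j) \<Longrightarrow> mat_diag n f = mat_diag n g"
  by (auto simp: mat_diag_def intro!: eq_matI)

lemma diff_add_smult_mat:
  fixes M :: "'a :: comm_ring mat"
  shows "Y \<in> carrier_mat m n \<Longrightarrow> Z \<in> carrier_mat m n \<Longrightarrow> M - (Y + c \<cdot>\<^sub>m Z) = M - Y - c \<cdot>\<^sub>m Z"
  by (intro eq_matI) (auto simp: algebra_simps)

lemma cnj_mult_mat3:
  assumes "P \<in> carrier_mat m n" "D \<in> carrier_mat n n'" "Q \<in> carrier_mat n' l"
  shows "map_mat cnj (P * D * Q) = map_mat cnj P * map_mat cnj D * map_mat cnj Q"
  using assms by (simp add: cnj.mat_hom_mult[OF mult_carrier_mat] cnj.mat_hom_mult del: assoc_mult_mat)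

definition mat_unit :: "nat \<Rightarrow> nat \<Rightarrow> nat \<Rightarrow> nat \<Rightarrow> 'a :: zero_neq_one mat" where
  "mat_unit n m a b = mat n m (\<lambda>(i,j). if i = a \<and> j = b then 1 else 0)"

lemma mat_unit_carrier [simp]: "mat_unit n m a b \<in> carrier_mat n m"
  and mat_unit_dim [simp]: "dim_row (mat_unit n m a b) = n" "dim_col (mat_unit n m a b) = m"
  and index_mat_unit [simp]:
    "i < n \<Longrightarrow> j < m \<Longrightarrow> mat_unit n m a b $$ (i,j) = (if i = a \<and> j = b then 1 else 0)"
  by (auto simp: mat_unit_def)

lemma cplx_mat_unit [simp]: "cplx (mat_unit n m a b) = mat_unit n m a b"
  by (intro eq_matI) auto

lemma cnj_mat_unit [simp]: "map_mat cnj (mat_unit n m a b) = mat_unit n m a b"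
  by (intro eq_matI) auto

lemma index_mult_mat_unit:
  fixes P :: "'a :: semiring_1 mat"
  assumes "P \<in> carrier_mat m n" "a < n" "p < m" "j < n'"
  shows "(P * mat_unit n n' a b) $$ (p,j) = (if j = b then P $$ (p,a) else 0)"
proof -
  have "(P * mat_unit n n' a b) $$ (p,j) = (\<Sum>l<n. P $$ (p,l) * mat_unit n n' a b $$ (l,j))"
    using assms by (intro index_mult_mat_sum) auto
  also have "\<dots> = (\<Sum>l<n. if l = a then (if j = b then P $$ (p,a) else 0) else 0)"
    using assms by (intro sum.cong) auto
  finally show ?thesis using assms by simp
qed

lemma index_mat_unit_mult:
  fixes Q :: "'a :: semiring_1 mat"
  assumes "Q \<in> carrier_mat n l" "b < n" "p < m" "q < l"
  shows "(mat_unit m n a b * Q) $$ (p,q) = (if p = a then Q $$ (b,q) else 0)"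
proof -
  have "(mat_unit m n a b * Q) $$ (p,q) = (\<Sum>j<n. mat_unit m n a b $$ (p,j) * Q $$ (j,q))"
    using assms by (intro index_mult_mat_sum) auto
  also have "\<dots> = (\<Sum>j<n. if j = b then (if p = a then Q $$ (b,q) else 0) else 0)"
    using assms by (intro sum.cong) auto
  finally show ?thesis using assms by simp
qed

lemma index_mult_mat_unit_mult:
  fixes P :: "'a :: semiring_1 mat"
  assumes P: "P \<in> carrier_mat m n" and Q: "Q \<in> carrier_mat n' l"
    and "a < n" "b < n'" "p < m" "q < l"
  shows "(P * mat_unit n n' a b * Q) $$ (p,q) = P $$ (p,a) * Q $$ (b,q)"
proof -
  have "(P * mat_unit n n' a b * Q) $$ (p,q) = (\<Sum>j<n'. (P * mat_unit n n' a b) $$ (p,j) * Q $$ (j,q))"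
    using assms by (intro index_mult_mat_sum[of _ m n']) auto
  also have "\<dots> = (\<Sum>j<n'. if j = b then P $$ (p,a) * Q $$ (b,q) else 0)"
    using assms by (intro sum.cong) (auto simp: index_mult_mat_unit simp del: index_mult_mat(1))
  finally show ?thesis using assms by simp
qed

lemma mat_unit_mult_mat_unit:
  assumes "b < m"
  shows "mat_unit n m a b * mat_unit m l b c = (mat_unit n l a c :: 'a :: semiring_1 mat)"
  using assms by (intro eq_matI)
    (auto simp: index_mat_unit_mult[OF mat_unit_carrier] simp del: index_mult_mat(1))

lemma mult_mat_unit_diag:
  fixes f :: "nat \<Rightarrow> 'a :: comm_semiring_1"
  assumes "k < n" "p < m"
  shows "mat_unit m n p k * mat_diag n f = f k \<cdot>\<^sub>m mat_unit m n p k"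
  using assms by (subst mat_diag_mult_right[of _ m]) (auto intro!: eq_matI)

lemma mult_diag_mat_unit:
  fixes f :: "nat \<Rightarrow> 'a :: comm_semiring_1"
  assumes "k < n" "q < m"
  shows "mat_diag n f * mat_unit n m k q = f k \<cdot>\<^sub>m mat_unit n m k q"
  using assms by (subst mat_diag_mult_left[of _ n m]) (auto intro!: eq_matI)

section \<open>The Frobenius pairing\<close>

definition frob_inner :: "complex mat \<Rightarrow> complex mat \<Rightarrow> complex" where
  "frob_inner X Y = (\<Sum>p<dim_row X. \<Sum>q<dim_col X. cnj (X $$ (p,q)) * Y $$ (p,q))"

lemma frob_inner_smult:
  "X \<in> carrier_mat m n \<Longrightarrow> Y \<in> carrier_mat m n \<Longrightarrow> frob_inner X (c \<cdot>\<^sub>m Y) = c * frob_inner X Y"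
  unfolding frob_inner_def by (simp add: sum_distrib_left mult_ac)

lemma frob_inner_cnj:
  "X \<in> carrier_mat m n \<Longrightarrow> Y \<in> carrier_mat m n \<Longrightarrow>
    frob_inner (map_mat cnj X) (map_mat cnj Y) = cnj (frob_inner X Y)"
  unfolding frob_inner_def by simp

lemma frob_inner_mult_mat_unit_mult:
  assumes "X \<in> carrier_mat m l" "P \<in> carrier_mat m n" "Q \<in> carrier_mat n' l" "a < n" "b < n'"
  shows "frob_inner X (P * mat_unit n n' a b * Q) =
    (\<Sum>p<m. \<Sum>q<l. cnj (X $$ (p,q)) * P $$ (p,a) * Q $$ (b,q))"
  using assms unfolding frob_inner_def
  by (auto simp: index_mult_mat_unit_mult mult.assoc simp del: index_mult_mat(1) intro!: sum.cong)

lemma frob_inner_mat_unit_mult: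
  assumes X: "X \<in> carrier_mat m l" and Q: "Q \<in> carrier_mat n l" and a: "a < m" and b: "b < n"
  shows "frob_inner X (mat_unit m n a b * Q) = (\<Sum>q<l. cnj (X $$ (a,q)) * Q $$ (b,q))"
proof -
  have "frob_inner X (mat_unit m n a b * Q) =
      (\<Sum>p<m. if p = a then (\<Sum>q<l. cnj (X $$ (a,q)) * Q $$ (b,q)) else 0)"
    using X Q b unfolding frob_inner_def
    by (intro sum.cong) (auto simp: index_mat_unit_mult simp del: index_mult_mat(1))
  then show ?thesis using a by simp
qed

lemma frob_inner_mult_mat_unit:
  assumes X: "X \<in> carrier_mat m l" and P: "P \<in> carrier_mat m n" and a: "a < n" and b: "b < l"
  shows "frob_inner X (P * mat_unit n l a b) = (\<Sum>p<m. cnj (X $$ (p,b)) * P $$ (p,a))"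
proof -
  have "frob_inner X (P * mat_unit n l a b) =
      (\<Sum>p<m. \<Sum>q<l. if q = b then cnj (X $$ (p,b)) * P $$ (p,a) else 0)"
    using X P a unfolding frob_inner_def
    by (intro sum.cong) (auto simp: index_mult_mat_unit simp del: index_mult_mat(1))
  then show ?thesis using b by simp
qed

lemma frob_inner_mat_unit_mult_eq_cnj:
  assumes X: "X \<in> carrier_mat m l" and W: "W \<in> carrier_mat n l" and b: "b \<in> carrier_mat l 1"
    and p: "p < m" and k: "k < n" and b_entry: "\<And>q. q < l \<Longrightarrow> b $$ (q,0) = cnj (W $$ (k,q))"
  shows "frob_inner X (mat_unit m n p k * W) = cnj ((X * b) $$ (p,0))"
proof -
  have "(X * b) $$ (p,0) = (\<Sum>q<l. X $$ (p,q) * b $$ (q,0))"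
    using X b p by (intro index_mult_mat_sum) auto
  then show ?thesis
    unfolding frob_inner_mat_unit_mult[OF X W p k] by (simp add: cnj_sum b_entry)
qed

lemma frob_inner_mult_mat_unit_eq_cnj:
  assumes X: "X \<in> carrier_mat m l" and V: "V \<in> carrier_mat m n" and c: "c \<in> carrier_mat m 1"
    and k: "k < n" and q: "q < l" and c_entry: "\<And>p. p < m \<Longrightarrow> c $$ (p,0) = V $$ (p,k)"
  shows "frob_inner X (V * mat_unit n l k q) = cnj ((mat_adjoint c * X) $$ (0,q))"
proof -
  have "(mat_adjoint c * X) $$ (0,q) = (\<Sum>p<m. mat_adjoint c $$ (0,p) * X $$ (p,q))"
    using X c q by (intro index_mult_mat_sum) (auto intro: carrier_matI)
  then show ?thesis
    unfolding frob_inner_mult_mat_unit[OF X V k q] using carrier_matD[OF c]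
    by (simp add: cnj_sum c_entry mult.commute)
qed

lemma frob_inner_mult_mat_unit_mult_eq_cnj:
  assumes X: "X \<in> carrier_mat m l" and V: "V \<in> carrier_mat m n" and W: "W \<in> carrier_mat n l"
    and c: "c \<in> carrier_mat m 1" and b: "b \<in> carrier_mat l 1" and k: "k < n"
    and c_entry: "\<And>p. p < m \<Longrightarrow> c $$ (p,0) = V $$ (p,k)"
    and b_entry: "\<And>q. q < l \<Longrightarrow> b $$ (q,0) = cnj (W $$ (k,q))"
  shows "frob_inner X (V * mat_unit n n k k * W) = cnj ((mat_adjoint c * X * b) $$ (0,0))"
proof -
  have ca: "mat_adjoint c \<in> carrier_mat 1 m" using c by (auto intro: carrier_matI)
  have row: "(mat_adjoint c * X) $$ (0,q) = (\<Sum>p<m. cnj (V $$ (p,k)) * X $$ (p,q))" if "q < l" for q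
  proof -
    have "(mat_adjoint c * X) $$ (0,q) = (\<Sum>p<m. mat_adjoint c $$ (0,p) * X $$ (p,q))"
      using ca X that by (intro index_mult_mat_sum) auto
    then show ?thesis using carrier_matD[OF c] by (simp add: c_entry)
  qed
  have "(mat_adjoint c * X * b) $$ (0,0) = (\<Sum>q<l. (mat_adjoint c * X) $$ (0,q) * b $$ (q,0))"
    using mult_carrier_mat[OF ca X] b by (intro index_mult_mat_sum) auto
  also have "\<dots> = (\<Sum>q<l. (\<Sum>p<m. cnj (V $$ (p,k)) * X $$ (p,q)) * b $$ (q,0))"
    by (intro sum.cong refl) (simp add: row)
  finally show ?thesis
    unfolding frob_inner_mult_mat_unit_mult[OF X V W k k] cnj_sum sum_distrib_right
    by (subst sum.swap) (simp add: b_entry mult_ac)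
qed

lemma frob_inner_mult_expand:
  assumes X: "X \<in> carrier_mat m l" and P: "P \<in> carrier_mat m n" and D: "D \<in> carrier_mat n n'"
    and Q: "Q \<in> carrier_mat n' l"
  shows "frob_inner X (P * D * Q) =
    (\<Sum>a<n. \<Sum>b<n'. D $$ (a,b) * frob_inner X (P * mat_unit n n' a b * Q))"
proof -
  have "(P * D * Q) $$ (p,q) = (\<Sum>a<n. \<Sum>b<n'. D $$ (a,b) * (P $$ (p,a) * Q $$ (b,q)))"
    if "p < m" "q < l" for p q
  proof -
    have "(P * D * Q) $$ (p,q) = (\<Sum>b<n'. (P * D) $$ (p,b) * Q $$ (b,q))"
      using that P D Q by (intro index_mult_mat_sum) auto
    also have "\<dots> = (\<Sum>b<n'. (\<Sum>a<n. P $$ (p,a) * D $$ (a,b)) * Q $$ (b,q))"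
      using that by (intro sum.cong refl) (simp add: index_mult_mat_sum[OF P D] del: index_mult_mat(1))
    also have "\<dots> = (\<Sum>a<n. \<Sum>b<n'. D $$ (a,b) * (P $$ (p,a) * Q $$ (b,q)))"
      by (subst sum.swap) (simp add: sum_distrib_left sum_distrib_right mult_ac)
    finally show ?thesis .
  qed
  then have "frob_inner X (P * D * Q) =
    (\<Sum>p<m. \<Sum>q<l. \<Sum>a<n. \<Sum>b<n'. D $$ (a,b) * (cnj (X $$ (p,q)) * P $$ (p,a) * Q $$ (b,q)))"
    using X unfolding frob_inner_def by (simp add: sum_distrib_left mult_ac)
  also have "\<dots> = (\<Sum>a<n. \<Sum>b<n'. \<Sum>p<m. \<Sum>q<l. D $$ (a,b) * (cnj (X $$ (p,q)) * P $$ (p,a) * Q $$ (b,q)))"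
    by (rule sum_swap_pairs)
  also have "\<dots> = (\<Sum>a<n. \<Sum>b<n'. D $$ (a,b) * frob_inner X (P * mat_unit n n' a b * Q))"
    using X P Q by (simp add: frob_inner_mult_mat_unit_mult sum_distrib_left)
  finally show ?thesis .
qed

lemma sum_frob_inner_eq_0_from_mat_units:
  assumes X: "\<And>i. i \<in> I \<Longrightarrow> X i \<in> carrier_mat m l" and P: "\<And>i. i \<in> I \<Longrightarrow> P i \<in> carrier_mat m n"
    and Q: "\<And>i. i \<in> I \<Longrightarrow> Q i \<in> carrier_mat n' l" and D: "D \<in> carrier_mat n n'"
    and units: "\<And>a b. a < n \<Longrightarrow> b < n' \<Longrightarrow>
      (\<Sum>i\<in>I. w i * frob_inner (X i) (P i * mat_unit n n' a b * Q i)) = 0"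
  shows "(\<Sum>i\<in>I. w i * frob_inner (X i) (P i * D * Q i)) = 0"
proof -
  have "(\<Sum>i\<in>I. w i * frob_inner (X i) (P i * D * Q i)) =
      (\<Sum>i\<in>I. w i * (\<Sum>a<n. \<Sum>b<n'. D $$ (a,b) * frob_inner (X i) (P i * mat_unit n n' a b * Q i)))"
  proof (intro sum.cong refl)
    fix i assume i: "i \<in> I"
    show "w i * frob_inner (X i) (P i * D * Q i) =
        w i * (\<Sum>a<n. \<Sum>b<n'. D $$ (a,b) * frob_inner (X i) (P i * mat_unit n n' a b * Q i))"
      by (subst frob_inner_mult_expand[OF X[OF i] P[OF i] D Q[OF i]]) (rule refl)
  qed
  also have "\<dots> =
      (\<Sum>i\<in>I. \<Sum>a<n. \<Sum>b<n'. D $$ (a,b) * (w i * frob_inner (X i) (P i * mat_unit n n' a b * Q i)))"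
    by (simp add: sum_distrib_left mult_ac)
  also have "\<dots> =
      (\<Sum>a<n. \<Sum>b<n'. D $$ (a,b) * (\<Sum>i\<in>I. w i * frob_inner (X i) (P i * mat_unit n n' a b * Q i)))"
    by (simp add: sum_swap3[where B = I] sum_distrib_left)
  also have "\<dots> = 0" by (simp add: units)
  finally show ?thesis .
qed

lemma has_real_derivative_cmod_sq_moebius:
  fixes x u b :: complex
  shows "((\<lambda>t::real. (cmod (x - of_real t / (1 - of_real t * b) * u))\<^sup>2) has_real_derivative
          - 2 * Re (cnj x * u)) (at 0)"
proof -
  define g where "g z = x - z / (1 - z * b) * u" for z :: complex
  have "(g has_field_derivative - u) (at (of_real 0))"
    unfolding g_def by (auto intro!: derivative_eq_intros)
  then have "((\<lambda>t::real. g (of_real t)) has_vector_derivative - u) (at 0)"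
    using has_vector_derivative_real_field by blast
  then have "((\<lambda>t::real. g (of_real t) * cnj (g (of_real t))) has_vector_derivative
      g 0 * cnj (- u) + - u * cnj (g 0)) (at 0)"
    by (auto intro!: derivative_eq_intros has_vector_derivative_cnj)
  from has_field_derivative_Re[OF this]
  have "((\<lambda>t::real. Re (g (of_real t) * cnj (g (of_real t)))) has_real_derivative
      Re (g 0 * cnj (- u) + - u * cnj (g 0))) (at 0)" .
  moreover have "Re (z * cnj z) = (cmod z)\<^sup>2" for z
    by (metis Re_complex_of_real complex_norm_square)
  moreover have "Re (g 0 * cnj (- u) + - u * cnj (g 0)) = - 2 * Re (cnj x * u)"
    unfolding g_def by (simp add: algebra_simps)
  ultimately have "((\<lambda>t::real. (cmod (g (of_real t)))\<^sup>2) has_real_derivative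
      - 2 * Re (cnj x * u)) (at 0)"
    by (simp only:)
  then show ?thesis unfolding g_def .
qed

lemma has_real_derivative_frob_sq_moebius:
  assumes X: "X \<in> carrier_mat m n" and U: "U \<in> carrier_mat m n"
  shows "((\<lambda>t::real. frob_sq (X - (of_real t / (1 - of_real t * b)) \<cdot>\<^sub>m U)) has_real_derivative
          - 2 * Re (frob_inner X U)) (at 0)"
proof -
  have "frob_sq (X - (of_real t / (1 - of_real t * b)) \<cdot>\<^sub>m U) =
      (\<Sum>p<m. \<Sum>q<n. (cmod (X $$ (p,q) - of_real t / (1 - of_real t * b) * U $$ (p,q)))\<^sup>2)" for t
    using X U unfolding frob_sq_def by simp
  moreover have "- 2 * Re (frob_inner X U) = (\<Sum>p<m. \<Sum>q<n. - 2 * Re (cnj (X $$ (p,q)) * U $$ (p,q)))"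
    using X unfolding frob_inner_def by (simp only: carrier_matD Re_sum sum_distrib_left)
  ultimately show ?thesis
    by (simp only:) (intro DERIV_sum has_real_derivative_cmod_sq_moebius)
qed

section \<open>Perturbations of the transfer function\<close>

lemma minv_minus_mat_unit:
  fixes M R :: "complex mat"
  assumes M: "M \<in> carrier_mat n n" and R: "R \<in> carrier_mat n n" and MR: "M * R = 1\<^sub>m n"
    and a: "a < n" and b: "b < n" and nz: "1 - t * R $$ (b,a) \<noteq> 0"
  defines "c \<equiv> t / (1 - t * R $$ (b,a))"
  shows "invertible_mat (M - t \<cdot>\<^sub>m mat_unit n n a b)"
    and "minv (M - t \<cdot>\<^sub>m mat_unit n n a b) = R + c \<cdot>\<^sub>m (R * mat_unit n n a b * R)"
proof -
  let ?Z = "R + c \<cdot>\<^sub>m (R * mat_unit n n a b * R)"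
  have Z: "?Z \<in> carrier_mat n n" using R by auto
  have Z_entry: "?Z $$ (m,y) = R $$ (m,y) + c * R $$ (m,a) * R $$ (b,y)" if "m < n" "y < n" for m y
    using that R a b by (simp add: index_mult_mat_unit_mult mult.assoc del: index_mult_mat(1))
  have MR_entry: "(\<Sum>m<n. M $$ (x,m) * R $$ (m,y)) = (if x = y then 1 else 0)" if "x < n" "y < n" for x y
    using index_mult_mat_sum[OF M R that] MR that by simp
  have "(M - t \<cdot>\<^sub>m mat_unit n n a b) * ?Z = 1\<^sub>m n"
  proof (rule eq_matI)
    fix x y assume "x < dim_row (1\<^sub>m n :: complex mat)" "y < dim_col (1\<^sub>m n :: complex mat)"
    then have x: "x < n" and y: "y < n" by auto
    have "((M - t \<cdot>\<^sub>m mat_unit n n a b) * ?Z) $$ (x,y)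
        = (\<Sum>m<n. (M $$ (x,m) - (if x = a \<and> m = b then t else 0)) * ?Z $$ (m,y))"
      using M Z x y by (subst index_mult_mat_sum[of _ n n _ n]) (auto intro!: sum.cong)
    also have "\<dots> = (\<Sum>m<n. M $$ (x,m) * ?Z $$ (m,y)) - (if x = a then t * ?Z $$ (b,y) else 0)"
      using b by (simp add: left_diff_distrib sum_subtractf if_distrib[of "\<lambda>z. z * _"] sum.delta
          cong: if_cong)
    also have "\<dots> = (\<Sum>m<n. M $$ (x,m) * R $$ (m,y)) + c * (\<Sum>m<n. M $$ (x,m) * R $$ (m,a)) * R $$ (b,y)
        - (if x = a then t * ?Z $$ (b,y) else 0)"
      using y by (simp add: Z_entry algebra_simps sum.distrib sum_distrib_left sum_distrib_right)
    also have "\<dots> =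
        (if x = y then 1 else 0) + (if x = a then (c - t - t * c * R $$ (b,a)) * R $$ (b,y) else 0)"
      using x y a b by (cases "x = a") (simp_all add: MR_entry Z_entry algebra_simps)
    also have "c - t - t * c * R $$ (b,a) = 0"
      using nz unfolding c_def by (simp add: field_simps)
    finally show "((M - t \<cdot>\<^sub>m mat_unit n n a b) * ?Z) $$ (x,y) = 1\<^sub>m n $$ (x,y)"
      using x y by simp
  qed (use M R in auto)
  moreover have "M - t \<cdot>\<^sub>m mat_unit n n a b \<in> carrier_mat n n" by (simp add: minus_carrier_mat)
  ultimately show "invertible_mat (M - t \<cdot>\<^sub>m mat_unit n n a b)"
    and "minv (M - t \<cdot>\<^sub>m mat_unit n n a b) = ?Z"
    using minv_eqI[OF _ Z] by blast+
qed

lemma tf_add_C: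
  assumes C: "C \<in> carrier_mat no r" and D: "D \<in> carrier_mat no r" and B: "B \<in> carrier_mat r ni"
    and R: "minv (s \<cdot>\<^sub>m cplx E - cplx A) \<in> carrier_mat r r"
  shows "tf E A B (C + t \<cdot>\<^sub>m D) s =
    tf E A B C s + of_real t \<cdot>\<^sub>m (cplx D * (minv (s \<cdot>\<^sub>m cplx E - cplx A) * cplx B))"
proof -
  let ?R = "minv (s \<cdot>\<^sub>m cplx E - cplx A)"
  have "(cplx C + of_real t \<cdot>\<^sub>m cplx D) * ?R * cplx B =
      cplx C * ?R * cplx B + of_real t \<cdot>\<^sub>m (cplx D * ?R * cplx B)"
    using C D B R by (simp add: add_mult_distrib_mat[of _ no r] mult_smult_assoc_mat[of _ no r])
  then show ?thesis
    unfolding tf_def cplx_add_smult[OF C D] using D B R by simp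
qed

lemma tf_add_B:
  assumes C: "C \<in> carrier_mat no r" and D: "D \<in> carrier_mat r ni" and B: "B \<in> carrier_mat r ni"
    and R: "minv (s \<cdot>\<^sub>m cplx E - cplx A) \<in> carrier_mat r r"
  shows "tf E A (B + t \<cdot>\<^sub>m D) C s =
    tf E A B C s + of_real t \<cdot>\<^sub>m (cplx C * minv (s \<cdot>\<^sub>m cplx E - cplx A) * cplx D)"
proof -
  let ?R = "minv (s \<cdot>\<^sub>m cplx E - cplx A)"
  have CR: "cplx C * ?R \<in> carrier_mat no r" using C R by simp
  show ?thesis
    unfolding tf_def cplx_add_smult[OF B D]
    using mult_add_distrib_mat[OF CR, of "cplx B" ni] mult_smult_distrib[OF CR, of "cplx D" ni] B D
    by simp
qed

lemma tf_add_A_mat_unit: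
  assumes E: "E \<in> carrier_mat r r" and A: "A \<in> carrier_mat r r"
    and B: "B \<in> carrier_mat r ni" and C: "C \<in> carrier_mat no r"
    and inv: "invertible_mat (s \<cdot>\<^sub>m cplx E - cplx A)" and a: "a < r" and b: "b < r"
    and nz: "1 - of_real t * minv (s \<cdot>\<^sub>m cplx E - cplx A) $$ (b,a) \<noteq> 0"
  defines "R \<equiv> minv (s \<cdot>\<^sub>m cplx E - cplx A)"
  shows "invertible_mat (s \<cdot>\<^sub>m cplx E - cplx (A + t \<cdot>\<^sub>m mat_unit r r a b))"
    and "tf E (A + t \<cdot>\<^sub>m mat_unit r r a b) B C s = tf E A B C s +
      (of_real t / (1 - of_real t * R $$ (b,a))) \<cdot>\<^sub>m (cplx C * R * mat_unit r r a b * (R * cplx B))"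
proof -
  let ?M = "s \<cdot>\<^sub>m cplx E - cplx A" and ?U = "mat_unit r r a b :: complex mat"
  let ?c = "of_real t / (1 - of_real t * R $$ (b,a))"
  have M: "?M \<in> carrier_mat r r" using E A by (simp add: minus_carrier_mat)
  note R = minv_correct[OF M inv, folded R_def]
  have pencil: "s \<cdot>\<^sub>m cplx E - cplx (A + t \<cdot>\<^sub>m mat_unit r r a b) = ?M - of_real t \<cdot>\<^sub>m ?U"
    using E A by (intro eq_matI) auto
  note SM = minv_minus_mat_unit[OF M R(1,2) a b nz[folded R_def]]
  show "invertible_mat (s \<cdot>\<^sub>m cplx E - cplx (A + t \<cdot>\<^sub>m mat_unit r r a b))"
    unfolding pencil by (rule SM(1))
  have CR: "cplx C * R \<in> carrier_mat no r" and RB: "R * cplx B \<in> carrier_mat r ni"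
    using C B R by auto
  have "cplx C * (R + ?c \<cdot>\<^sub>m (R * ?U * R)) * cplx B
      = cplx C * R * cplx B + ?c \<cdot>\<^sub>m (cplx C * (R * ?U * R) * cplx B)"
  proof -
    have W: "R * ?U * R \<in> carrier_mat r r" and Cc: "cplx C \<in> carrier_mat no r"
      and Bc: "cplx B \<in> carrier_mat r ni" using R C B by auto
    have "cplx C * (R + ?c \<cdot>\<^sub>m (R * ?U * R)) = cplx C * R + ?c \<cdot>\<^sub>m (cplx C * (R * ?U * R))"
      using mult_add_distrib_mat[OF Cc R(1) smult_carrier_mat[OF W]] mult_smult_distrib[OF Cc W] by simp
    then show ?thesis
      using add_mult_distrib_mat[OF CR smult_carrier_mat[OF mult_carrier_mat[OF Cc W]] Bc]
        mult_smult_assoc_mat[OF mult_carrier_mat[OF Cc W] Bc] by simp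
  qed
  also have "cplx C * (R * ?U * R) * cplx B = cplx C * R * ?U * (R * cplx B)"
    using C B R by (simp add: assoc_mult_mat_dims)
  finally show "tf E (A + t \<cdot>\<^sub>m mat_unit r r a b) B C s =
      tf E A B C s + ?c \<cdot>\<^sub>m (cplx C * R * ?U * (R * cplx B))"
    unfolding tf_def pencil SM(2) R_def .
qed

lemma rfrob_sq_add_smult_mat_unit:
  assumes M: "M \<in> carrier_mat n m" and a: "a < n" and b: "b < m"
  shows "rfrob_sq (M + t \<cdot>\<^sub>m mat_unit n m a b - M) = t\<^sup>2"
proof -
  have "(M + t \<cdot>\<^sub>m mat_unit n m a b - M) $$ (i,j) = (if i = a \<and> j = b then t else 0)"
    if "i < n" "j < m" for i j
    using M that by simp
  then have "rfrob_sq (M + t \<cdot>\<^sub>m mat_unit n m a b - M) =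
      (\<Sum>i<n. \<Sum>j<m. (if i = a \<and> j = b then t else 0)\<^sup>2)"
    unfolding rfrob_sq_def using M by (simp add: minus_carrier_mat)
  also have "\<dots> = (\<Sum>i<n. if i = a then t\<^sup>2 else 0)"
    using b by (intro sum.cong refl) (simp add: if_distrib[of "\<lambda>x. x\<^sup>2"] cong: if_cong)
  also have "\<dots> = t\<^sup>2" using a by simp
  finally show ?thesis .
qed

lemma rfrob_sq_diff_self [simp]: "rfrob_sq (M - M) = 0"
  unfolding rfrob_sq_def by simp

section \<open>Diagonalized pencils\<close>

locale diag_pencil =
  fixes r :: nat and E A S T :: "complex mat" and lam :: "nat \<Rightarrow> complex"
  assumes E: "E \<in> carrier_mat r r" and A: "A \<in> carrier_mat r r"
    and S: "S \<in> carrier_mat r r" and T: "T \<in> carrier_mat r r"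
    and SET: "mat_adjoint S * E * T = 1\<^sub>m r"
    and SAT: "mat_adjoint S * A * T = mat_diag r lam"

begin

lemma adjoint_carrier: "mat_adjoint S \<in> carrier_mat r r"
  using S by (auto intro: carrier_matI)

lemma T_mult_adjoint_E: "T * (mat_adjoint S * E) = 1\<^sub>m r"
  using mat_mult_left_right_inverse[OF _ T SET] adjoint_carrier E by simp

lemma adjoint_pencil_diag:
  "mat_adjoint S * (s \<cdot>\<^sub>m E - A) * T = mat_diag r (\<lambda>j. s - lam j)"
proof -
  have PE: "mat_adjoint S * E \<in> carrier_mat r r" and PA: "mat_adjoint S * A \<in> carrier_mat r r"
    using adjoint_carrier E A by auto
  have "mat_adjoint S * (s \<cdot>\<^sub>m E - A) = s \<cdot>\<^sub>m (mat_adjoint S * E) - mat_adjoint S * A"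
    using mult_minus_distrib_mat[OF adjoint_carrier smult_carrier_mat[OF E] A]
      mult_smult_distrib[OF adjoint_carrier E] by simp
  then have "mat_adjoint S * (s \<cdot>\<^sub>m E - A) * T = s \<cdot>\<^sub>m (mat_adjoint S * E) * T - mat_adjoint S * A * T"
    using minus_mult_distrib_mat[OF smult_carrier_mat[OF PE] PA T] by simp
  also have "\<dots> = s \<cdot>\<^sub>m (mat_adjoint S * E * T) - mat_adjoint S * A * T"
    using mult_smult_assoc_mat[OF PE T] by simp
  also have "\<dots> = mat_diag r (\<lambda>j. s - lam j)"
    unfolding SET SAT by (auto simp: mat_diag_def intro!: eq_matI)
  finally show ?thesis .
qed

lemma adjoint_pencil_factor:
  "mat_adjoint S * (s \<cdot>\<^sub>m E - A) = mat_diag r (\<lambda>j. s - lam j) * (mat_adjoint S * E)"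
proof -
  have PM: "mat_adjoint S * (s \<cdot>\<^sub>m E - A) \<in> carrier_mat r r"
    using adjoint_carrier E A by (simp add: minus_carrier_mat)
  have PE: "mat_adjoint S * E \<in> carrier_mat r r" using adjoint_carrier E by simp
  have "mat_adjoint S * (s \<cdot>\<^sub>m E - A) = mat_adjoint S * (s \<cdot>\<^sub>m E - A) * (T * (mat_adjoint S * E))"
    using right_mult_one_mat[OF PM] by (simp add: T_mult_adjoint_E)
  also have "\<dots> = mat_adjoint S * (s \<cdot>\<^sub>m E - A) * T * (mat_adjoint S * E)"
    using assoc_mult_mat[OF PM T PE] by simp
  finally show ?thesis by (simp only: adjoint_pencil_diag)
qed

lemma pole_ne:
  assumes inv: "invertible_mat (s \<cdot>\<^sub>m E - A)" and j: "j < r"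
  shows "s \<noteq> lam j"
proof
  assume s: "s = lam j"
  \<comment> \<open>then row j of S^* (s E - A) vanishes, hence so does row j of S^*, contradicting S^* E T = I\<close>
  let ?M = "s \<cdot>\<^sub>m E - A" and ?\<Delta> = "mat_diag r (\<lambda>j. s - lam j)"
  have M: "?M \<in> carrier_mat r r" using E A by (simp add: minus_carrier_mat)
  note R = minv_correct[OF M inv]
  have \<Delta>PE: "?\<Delta> * (mat_adjoint S * E) \<in> carrier_mat r r"
    using adjoint_carrier E by (intro mult_carrier_mat[OF mat_diag_dim]) simp
  have "mat_adjoint S = mat_adjoint S * (?M * minv ?M)"
    using right_mult_one_mat[OF adjoint_carrier] by (simp add: R(2))
  also have "\<dots> = ?\<Delta> * (mat_adjoint S * E) * minv ?M"
    using assoc_mult_mat[OF adjoint_carrier M R(1)] by (simp add: adjoint_pencil_factor)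
  finally have P: "mat_adjoint S = ?\<Delta> * (mat_adjoint S * E) * minv ?M" .
  have P_row: "mat_adjoint S $$ (j,m) = 0" if m: "m < r" for m
  proof -
    have "mat_adjoint S $$ (j,m) = (\<Sum>l<r. (?\<Delta> * (mat_adjoint S * E)) $$ (j,l) * minv ?M $$ (l,m))"
      by (subst P, rule index_mult_mat_sum[OF \<Delta>PE R(1) j m])
    also have "\<dots> = 0"
      using adjoint_carrier E j s
      by (simp add: mat_diag_mult_left[of "mat_adjoint S * E" r r] del: index_mult_mat(1))
    finally show ?thesis .
  qed
  have "1 = (mat_adjoint S * (E * T)) $$ (j,j)"
    using SET adjoint_carrier E T j by simp
  also have "\<dots> = (\<Sum>m<r. mat_adjoint S $$ (j,m) * (E * T) $$ (m,j))"
    using adjoint_carrier E T j by (intro index_mult_mat_sum) auto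
  also have "\<dots> = 0" by (simp add: P_row)
  finally show False by simp
qed

text \<open>The lemma below yields the pole-residue form of the statement: with c_j = C T e_j and
  b_j = B^T S e_j, tf E A B C s = C T diag(1/(s - lam_j)) S^* B is the sum of c_j b_j^* / (s - lam_j).\<close>

lemma minv_pencil_modal:
  assumes inv: "invertible_mat (s \<cdot>\<^sub>m E - A)"
  shows "minv (s \<cdot>\<^sub>m E - A) = T * mat_diag r (\<lambda>j. 1 / (s - lam j)) * mat_adjoint S"
proof -
  let ?M = "s \<cdot>\<^sub>m E - A" and ?\<Delta> = "mat_diag r (\<lambda>j. s - lam j)"
    and ?D = "mat_diag r (\<lambda>j. 1 / (s - lam j))"
  have M: "?M \<in> carrier_mat r r" using E A by (simp add: minus_carrier_mat)
  have PE: "mat_adjoint S * E \<in> carrier_mat r r" using adjoint_carrier E by simp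
  have TD: "T * ?D \<in> carrier_mat r r" using T by simp
  have Z: "T * ?D * mat_adjoint S \<in> carrier_mat r r" using TD adjoint_carrier by simp
  have D\<Delta>: "?D * ?\<Delta> = 1\<^sub>m r"
    using pole_ne[OF inv] by (simp add: mat_diag_cong[of r _ "\<lambda>_. 1"])
  have "T * ?D * mat_adjoint S * ?M = T * (?D * (mat_adjoint S * ?M))"
    using assoc_mult_mat[OF TD adjoint_carrier M]
      assoc_mult_mat[OF T mat_diag_dim, of "mat_adjoint S * ?M" r]
      adjoint_carrier M by simp
  also have "\<dots> = T * (?D * ?\<Delta> * (mat_adjoint S * E))"
    by (simp only: adjoint_pencil_factor assoc_mult_mat[OF mat_diag_dim mat_diag_dim PE])
  also have "\<dots> = 1\<^sub>m r"
    unfolding D\<Delta> left_mult_one_mat[OF PE] by (rule T_mult_adjoint_E)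
  finally have "T * ?D * mat_adjoint S * ?M = 1\<^sub>m r" .
  then have "?M * (T * ?D * mat_adjoint S) = 1\<^sub>m r"
    by (rule mat_mult_left_right_inverse[OF Z M])
  then show ?thesis by (rule minv_eqI(2)[OF M Z])
qed

end

lemma index_mult_weighted_sum_mat:
  fixes w :: "nat \<Rightarrow> 'a :: comm_semiring_1"
  assumes M: "\<And>i. i < N \<Longrightarrow> M i \<in> carrier_mat m n" and u: "u \<in> carrier_mat k m"
    and v: "v \<in> carrier_mat n l" and j: "j < k" and h: "h < l"
  shows "(u * mat m n (\<lambda>(p,q). \<Sum>i<N. w i * M i $$ (p,q)) * v) $$ (j,h) =
    (\<Sum>i<N. w i * (u * M i * v) $$ (j,h))"
proof -
  have triple: "(u * Y * v) $$ (j,h) = (\<Sum>q<n. \<Sum>p<m. u $$ (j,p) * Y $$ (p,q) * v $$ (q,h))"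
    if "Y \<in> carrier_mat m n" for Y
  proof -
    have "(u * Y * v) $$ (j,h) = (\<Sum>q<n. (u * Y) $$ (j,q) * v $$ (q,h))"
      using that u v j h by (intro index_mult_mat_sum) auto
    also have "\<dots> = (\<Sum>q<n. \<Sum>p<m. u $$ (j,p) * Y $$ (p,q) * v $$ (q,h))"
      using that u j by (intro sum.cong refl)
        (simp add: index_mult_mat_sum[OF u that] sum_distrib_right del: index_mult_mat(1))
    finally show ?thesis .
  qed
  have "(u * mat m n (\<lambda>(p,q). \<Sum>i<N. w i * M i $$ (p,q)) * v) $$ (j,h) =
      (\<Sum>q<n. \<Sum>p<m. \<Sum>i<N. w i * (u $$ (j,p) * M i $$ (p,q) * v $$ (q,h)))"
    by (subst triple) (auto simp: sum_distrib_left sum_distrib_right mult_ac intro!: sum.cong)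
  also have "\<dots> = (\<Sum>i<N. w i * (u * M i * v) $$ (j,h))"
    by (simp add: triple M sum_swap3[where B = "{..<n}"] sum.swap[where A = "{..<m}"] sum_distrib_left)
  finally show ?thesis .
qed

lemma weighted_sum_mat_mult_eqI:
  fixes w :: "nat \<Rightarrow> 'a :: comm_ring_1"
  assumes M: "\<And>i. i < N \<Longrightarrow> M i \<in> carrier_mat m n" and M': "\<And>i. i < N \<Longrightarrow> M' i \<in> carrier_mat m n"
    and u: "u \<in> carrier_mat k m" and v: "v \<in> carrier_mat n l"
    and zero: "\<And>j h. j < k \<Longrightarrow> h < l \<Longrightarrow> (\<Sum>i<N. w i * (u * (M i - M' i) * v) $$ (j,h)) = 0"
  shows "u * mat m n (\<lambda>(p,q). \<Sum>i<N. w i * M i $$ (p,q)) * v =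
    u * mat m n (\<lambda>(p,q). \<Sum>i<N. w i * M' i $$ (p,q)) * v"
proof (rule eq_matI)
  fix j h assume "j < dim_row (u * mat m n (\<lambda>(p,q). \<Sum>i<N. w i * M' i $$ (p,q)) * v)"
    and "h < dim_col (u * mat m n (\<lambda>(p,q). \<Sum>i<N. w i * M' i $$ (p,q)) * v)"
  then have j: "j < k" and h: "h < l" using u v by auto
  have "(u * (M i - M' i) * v) $$ (j,h) = (u * M i * v) $$ (j,h) - (u * M' i * v) $$ (j,h)"
    if "i < N" for i
  proof -
    have "u * (M i - M' i) * v = u * M i * v - u * M' i * v"
      using u v M[OF that] M'[OF that]
      by (simp add: mult_minus_distrib_mat[OF u] minus_mult_distrib_mat[of _ k n])
    then show ?thesis using u v j h by simp
  qed
  then have "(\<Sum>i<N. w i * (u * M i * v) $$ (j,h)) = (\<Sum>i<N. w i * (u * M' i * v) $$ (j,h))"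
    using zero[OF j h] by (simp add: right_diff_distrib sum_subtractf)
  then show "(u * mat m n (\<lambda>(p,q). \<Sum>i<N. w i * M i $$ (p,q)) * v) $$ (j,h) =
      (u * mat m n (\<lambda>(p,q). \<Sum>i<N. w i * M' i $$ (p,q)) * v) $$ (j,h)"
    by (simp add: index_mult_weighted_sum_mat[OF M u v j h] index_mult_weighted_sum_mat[OF M' u v j h]
        del: index_mult_mat(1))
qed (use u v in auto)

lemma Gfun_carrier: "Gfun no ni N \<omega> M \<rho> s \<in> carrier_mat no ni"
  by (simp add: Gfun_def)

lemma mat_deriv_Gfun:
  assumes s: "\<forall>i<N. s \<noteq> \<i> * complex_of_real (\<omega> i)"
  shows "mat_deriv no ni (Gfun no ni N \<omega> M \<rho>) s = mat no ni (\<lambda>(p,q).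
    \<Sum>i<N. - (complex_of_real (\<rho> i) / (s - \<i> * complex_of_real (\<omega> i))\<^sup>2) * M i $$ (p,q))"
proof -
  have "deriv (\<lambda>z. Gfun no ni N \<omega> M \<rho> z $$ (p,q)) s =
      (\<Sum>i<N. - (complex_of_real (\<rho> i) / (s - \<i> * complex_of_real (\<omega> i))\<^sup>2) * M i $$ (p,q))"
    if "p < no" "q < ni" for p q
  proof -
    have "(\<lambda>z. Gfun no ni N \<omega> M \<rho> z $$ (p,q)) =
        (\<lambda>z. \<Sum>i<N. complex_of_real (\<rho> i) / (z - \<i> * complex_of_real (\<omega> i)) * M i $$ (p,q))"
      using that by (simp add: Gfun_def)
    moreover have "((\<lambda>z. \<Sum>i<N. complex_of_real (\<rho> i) / (z - \<i> * complex_of_real (\<omega> i)) * M i $$ (p,q))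
        has_field_derivative
        (\<Sum>i<N. - (complex_of_real (\<rho> i) / (s - \<i> * complex_of_real (\<omega> i))\<^sup>2) * M i $$ (p,q))) (at s)"
      using s by (intro DERIV_sum)
        (auto intro!: derivative_eq_intros simp: field_simps power2_eq_square)
    ultimately show ?thesis by (simp add: DERIV_imp_deriv)
  qed
  then show ?thesis unfolding mat_deriv_def by (intro eq_matI) auto
qed

section \<open>First-order conditions at a local minimizer\<close>

locale lsq_local_min =
  fixes N r ni no :: nat
    and \<omega> \<rho> :: "nat \<Rightarrow> real"
    and H :: "nat \<Rightarrow> complex mat"
    and E A B C :: "real mat"
  assumes H_dim: "\<forall>i<N. H i \<in> carrier_mat no ni"
    and \<omega>_distinct: "inj_on \<omega> {..<N}"
    and conj_closed: "\<forall>k<N. \<exists>j<N. \<omega> j = - \<omega> k \<and> H j = map_mat cnj (H k) \<and> \<rho> j = \<rho> k"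
    and locmin: "local_minimizer N \<omega> H \<rho> r ni no E A B C"

begin

definition sample :: "nat \<Rightarrow> complex" where
  "sample i = \<i> * complex_of_real (\<omega> i)"

definition R :: "nat \<Rightarrow> complex mat" where
  "R i = minv (sample i \<cdot>\<^sub>m cplx E - cplx A)"

definition X :: "nat \<Rightarrow> complex mat" where
  "X i = H i - tf E A B C (sample i)"

definition mirror :: "nat \<Rightarrow> nat" where
  "mirror k = (SOME j. j < N \<and> \<omega> j = - \<omega> k \<and> H j = map_mat cnj (H k) \<and> \<rho> j = \<rho> k)"

lemma H_carrier: "i < N \<Longrightarrow> H i \<in> carrier_mat no ni"
  using H_dim by simp

lemma admissible: "admissible N \<omega> r ni no E A B C"
  using locmin unfolding local_minimizer_def by auto

lemma E: "E \<in> carrier_mat r r" and A: "A \<in> carrier_mat r r"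
  and B: "B \<in> carrier_mat r ni" and C: "C \<in> carrier_mat no r"
  using admissible unfolding admissible_def by auto

lemma cplx_B: "cplx B \<in> carrier_mat r ni" and cplx_C: "cplx C \<in> carrier_mat no r"
  using B C by auto

lemma pencil_invertible: "i < N \<Longrightarrow> invertible_mat (sample i \<cdot>\<^sub>m cplx E - cplx A)"
  using admissible unfolding admissible_def sample_def by auto

lemma pencil_carrier: "sample i \<cdot>\<^sub>m cplx E - cplx A \<in> carrier_mat r r"
  using E A by (simp add: minus_carrier_mat)

lemma R_carrier: "i < N \<Longrightarrow> R i \<in> carrier_mat r r"
  unfolding R_def using minv_correct[OF pencil_carrier pencil_invertible] by auto

lemma X_eq: "X i = H i - cplx C * R i * cplx B"
  unfolding X_def tf_def R_def ..

lemma tf_sample_carrier: assumes "i < N" shows "tf E A B C (sample i) \<in> carrier_mat no ni"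
  unfolding tf_def R_def[symmetric] using R_carrier[OF assms] B C by simp

lemma X_carrier: assumes "i < N" shows "X i \<in> carrier_mat no ni"
  unfolding X_eq using R_carrier[OF assms] B C by (simp add: minus_carrier_mat)

lemma tf_at_sample_carrier: "i < N \<Longrightarrow> tf E A B C (\<i> * complex_of_real (\<omega> i)) \<in> carrier_mat no ni"
  and H_minus_tf_at_sample: "H i - tf E A B C (\<i> * complex_of_real (\<omega> i)) = X i"
  using tf_sample_carrier unfolding X_def sample_def by auto

lemma mirror: "k < N \<Longrightarrow> mirror k < N \<and> \<omega> (mirror k) = - \<omega> k \<and>
    H (mirror k) = map_mat cnj (H k) \<and> \<rho> (mirror k) = \<rho> k"
  unfolding mirror_def by (rule someI_ex) (use conj_closed in auto)

lemma mirror_involution: "\<forall>k<N. mirror k < N \<and> mirror (mirror k) = k"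
proof (intro allI impI conjI)
  fix k assume k: "k < N"
  show "mirror k < N" using mirror[OF k] by simp
  have "mirror (mirror k) < N" "\<omega> (mirror (mirror k)) = \<omega> k"
    using mirror[OF k] mirror[of "mirror k"] by auto
  then show "mirror (mirror k) = k" using \<omega>_distinct k unfolding inj_on_def by auto
qed

lemma R_mirror:
  assumes i: "i < N" shows "R (mirror i) = map_mat cnj (R i)"
proof -
  have "sample (mirror i) \<cdot>\<^sub>m cplx E - cplx A = map_mat cnj (sample i \<cdot>\<^sub>m cplx E - cplx A)"
    using mirror[OF i] E A by (intro eq_matI) (auto simp: sample_def)
  then show ?thesis
    unfolding R_def using minv_cnj[OF pencil_carrier pencil_invertible[OF i]] by simp
qed

lemma X_mirror:
  assumes i: "i < N" shows "X (mirror i) = map_mat cnj (X i)"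
proof -
  have "map_mat cnj (cplx C * R i * cplx B) = cplx C * R (mirror i) * cplx B"
    unfolding cnj.mat_hom_mult[OF mult_carrier_mat[OF cplx_C R_carrier[OF i]] cplx_B]
      cnj.mat_hom_mult[OF cplx_C R_carrier[OF i]] by (simp add: R_mirror[OF i])
  moreover have "map_mat cnj (X i) = map_mat cnj (H i) - map_mat cnj (cplx C * R i * cplx B)"
    unfolding X_eq using H_dim R_carrier[OF i] B C i by (intro eq_matI) auto
  ultimately show ?thesis
    unfolding X_eq using mirror[OF i] by simp
qed

lemma sum_frob_inner_mirror:
  assumes U: "\<And>i. i < N \<Longrightarrow> U i \<in> carrier_mat no ni"
    and U_mirror: "\<And>i. i < N \<Longrightarrow> U (mirror i) = map_mat cnj (U i)"
  shows "cnj (\<Sum>i<N. of_real (\<rho> i) * frob_inner (X i) (U i)) =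
    (\<Sum>i<N. of_real (\<rho> i) * frob_inner (X i) (U i))"
proof (rule sum_cnj_involution[OF mirror_involution], intro allI impI)
  fix i assume i: "i < N"
  show "of_real (\<rho> (mirror i)) * frob_inner (X (mirror i)) (U (mirror i)) =
      cnj (of_real (\<rho> i) * frob_inner (X i) (U i))"
    using mirror[OF i] frob_inner_cnj[OF X_carrier[OF i] U[OF i]]
    by (simp add: X_mirror[OF i] U_mirror[OF i])
qed

text \<open>The form of resid covers both kinds of curves used below: beta = 0 when an entry of B or C
  moves, and beta_i = (R i)(b,a), from the Sherman-Morrison update, when entry (a,b) of A moves.\<close>

lemma first_order_condition:
  fixes Ap Bp Cp :: "real \<Rightarrow> real mat" and U :: "nat \<Rightarrow> complex mat" and \<beta> :: "nat \<Rightarrow> complex"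
  assumes d: "d > 0"
    and adm: "\<And>t. \<bar>t\<bar> < d \<Longrightarrow> admissible N \<omega> r ni no E (Ap t) (Bp t) (Cp t)"
    and dist: "\<And>t. rfrob_sq (Ap t - A) + rfrob_sq (Bp t - B) + rfrob_sq (Cp t - C) = t\<^sup>2"
    and resid: "\<And>t i. \<bar>t\<bar> < d \<Longrightarrow> i < N \<Longrightarrow>
      H i - tf E (Ap t) (Bp t) (Cp t) (sample i) = X i - (of_real t / (1 - of_real t * \<beta> i)) \<cdot>\<^sub>m U i"
    and U: "\<And>i. i < N \<Longrightarrow> U i \<in> carrier_mat no ni"
    and U_mirror: "\<And>i. i < N \<Longrightarrow> U (mirror i) = map_mat cnj (U i)"
  shows "(\<Sum>i<N. of_real (\<rho> i) * frob_inner (X i) (U i)) = 0"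
proof -
  obtain \<epsilon> where \<epsilon>: "\<epsilon> > 0" and min: "\<And>E' A' B' C'. admissible N \<omega> r ni no E' A' B' C' \<Longrightarrow>
      rfrob_sq (E' - E) + rfrob_sq (A' - A) + rfrob_sq (B' - B) + rfrob_sq (C' - C) < \<epsilon>\<^sup>2 \<Longrightarrow>
      Jcost N \<omega> H \<rho> E A B C \<le> Jcost N \<omega> H \<rho> E' A' B' C'"
    using locmin unfolding local_minimizer_def by blast
  define J where "J t = (\<Sum>i<N. \<rho> i * frob_sq (X i - (of_real t / (1 - of_real t * \<beta> i)) \<cdot>\<^sub>m U i))"
    for t :: real
  have J_eq: "J t = Jcost N \<omega> H \<rho> E (Ap t) (Bp t) (Cp t)" if "\<bar>t\<bar> < d" for t
    unfolding J_def Jcost_def using resid[OF that] by (simp add: sample_def)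
  have "X i - 0 \<cdot>\<^sub>m U i = X i" if "i < N" for i
    using X_carrier[OF that] U[OF that] by (intro eq_matI) auto
  then have J0: "J 0 = Jcost N \<omega> H \<rho> E A B C"
    unfolding J_def Jcost_def X_def by (simp add: sample_def)
  have J_min: "J 0 \<le> J t" if t: "\<bar>t\<bar> < min d \<epsilon>" for t
  proof -
    have "\<bar>t\<bar>\<^sup>2 < \<epsilon>\<^sup>2" using t by (intro power_strict_mono) auto
    then show ?thesis
      using min[OF adm] dist t by (simp add: J0 J_eq)
  qed
  have "(J has_real_derivative (\<Sum>i<N. \<rho> i * (- 2 * Re (frob_inner (X i) (U i))))) (at 0)"
    unfolding J_def
    by (intro DERIV_sum DERIV_cmult has_real_derivative_frob_sq_moebius[OF X_carrier U]) simp_all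
  moreover have "min d \<epsilon> > 0" using d \<epsilon> by simp
  moreover have "\<forall>t. \<bar>0 - t\<bar> < min d \<epsilon> \<longrightarrow> J 0 \<le> J t" using J_min by simp
  ultimately have "(\<Sum>i<N. \<rho> i * (- 2 * Re (frob_inner (X i) (U i)))) = 0"
    by (rule DERIV_local_min)
  moreover have "(\<Sum>i<N. \<rho> i * (- 2 * Re (frob_inner (X i) (U i)))) =
      - 2 * Re (\<Sum>i<N. of_real (\<rho> i) * frob_inner (X i) (U i))"
    by (simp add: Re_sum sum_distrib_left algebra_simps)
  ultimately have Re0: "Re (\<Sum>i<N. of_real (\<rho> i) * frob_inner (X i) (U i)) = 0" by simp
  have real_zero: "z = 0" if "cnj z = z" "Re z = 0" for z :: complex
    using that by (simp add: complex_eq_iff)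
  show ?thesis by (rule real_zero[OF sum_frob_inner_mirror[where U = U, OF U U_mirror] Re0])
qed

lemma CR_carrier: "i < N \<Longrightarrow> cplx C * R i \<in> carrier_mat no r"
  using mult_carrier_mat[OF cplx_C R_carrier] .

lemma RB_carrier: "i < N \<Longrightarrow> R i * cplx B \<in> carrier_mat r ni"
  using mult_carrier_mat[OF R_carrier cplx_B] .

lemma gradient_C_mat_unit:
  assumes p: "p < no" and a: "a < r"
  shows "(\<Sum>i<N. of_real (\<rho> i) * frob_inner (X i) (mat_unit no r p a * (R i * cplx B))) = 0"
proof (rule first_order_condition[where Ap = "\<lambda>_. A" and Bp = "\<lambda>_. B"
      and Cp = "\<lambda>t. C + t \<cdot>\<^sub>m mat_unit no r p a" and \<beta> = "\<lambda>_. 0" and d = 1])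
  let ?U = "mat_unit no r p a"
  show "admissible N \<omega> r ni no E A B (C + t \<cdot>\<^sub>m ?U)" for t
    using admissible C unfolding admissible_def by simp
  show "rfrob_sq (A - A) + rfrob_sq (B - B) + rfrob_sq (C + t \<cdot>\<^sub>m ?U - C) = t\<^sup>2" for t
    using rfrob_sq_add_smult_mat_unit[OF C p a] by simp
  show "?U * (R i * cplx B) \<in> carrier_mat no ni" if "i < N" for i
    using mult_carrier_mat[OF mat_unit_carrier RB_carrier[OF that]] .
  show "H i - tf E A B (C + t \<cdot>\<^sub>m ?U) (sample i) =
      X i - (of_real t / (1 - of_real t * 0)) \<cdot>\<^sub>m (?U * (R i * cplx B))" if i: "i < N" for t i
    using tf_add_C[OF C mat_unit_carrier B R_carrier[OF i, unfolded R_def]]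
    by (simp add: X_def R_def[symmetric] diff_add_smult_mat[OF tf_sample_carrier[OF i]
          mult_carrier_mat[OF mat_unit_carrier RB_carrier[OF i]]])
  show "?U * (R (mirror i) * cplx B) = map_mat cnj (?U * (R i * cplx B))" if "i < N" for i
    unfolding cnj.mat_hom_mult[OF mat_unit_carrier RB_carrier[OF that]]
      cnj.mat_hom_mult[OF R_carrier[OF that] cplx_B] R_mirror[OF that] by simp
qed simp

lemma gradient_B_mat_unit:
  assumes a: "a < r" and q: "q < ni"
  shows "(\<Sum>i<N. of_real (\<rho> i) * frob_inner (X i) (cplx C * R i * mat_unit r ni a q)) = 0"
proof (rule first_order_condition[where Ap = "\<lambda>_. A" and Bp = "\<lambda>t. B + t \<cdot>\<^sub>m mat_unit r ni a q"
      and Cp = "\<lambda>_. C" and \<beta> = "\<lambda>_. 0" and d = 1])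
  let ?U = "mat_unit r ni a q"
  show "admissible N \<omega> r ni no E A (B + t \<cdot>\<^sub>m ?U) C" for t
    using admissible B unfolding admissible_def by simp
  show "rfrob_sq (A - A) + rfrob_sq (B + t \<cdot>\<^sub>m ?U - B) + rfrob_sq (C - C) = t\<^sup>2" for t
    using rfrob_sq_add_smult_mat_unit[OF B a q] by simp
  show "cplx C * R i * ?U \<in> carrier_mat no ni" if "i < N" for i
    using mult_carrier_mat[OF CR_carrier[OF that] mat_unit_carrier] .
  show "H i - tf E A (B + t \<cdot>\<^sub>m ?U) C (sample i) =
      X i - (of_real t / (1 - of_real t * 0)) \<cdot>\<^sub>m (cplx C * R i * ?U)" if i: "i < N" for t i
    using tf_add_B[OF C mat_unit_carrier B R_carrier[OF i, unfolded R_def]]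
    by (simp add: X_def R_def[symmetric] diff_add_smult_mat[OF tf_sample_carrier[OF i]
          mult_carrier_mat[OF CR_carrier[OF i] mat_unit_carrier]])
  show "cplx C * R (mirror i) * ?U = map_mat cnj (cplx C * R i * ?U)" if "i < N" for i
    unfolding cnj.mat_hom_mult[OF CR_carrier[OF that] mat_unit_carrier]
      cnj.mat_hom_mult[OF cplx_C R_carrier[OF that]] R_mirror[OF that] by simp
qed simp

lemma gradient_A_mat_unit:
  assumes a: "a < r" and b: "b < r"
  shows "(\<Sum>i<N. of_real (\<rho> i) *
    frob_inner (X i) (cplx C * R i * mat_unit r r a b * (R i * cplx B))) = 0"
proof -
  let ?U = "mat_unit r r a b"
  obtain d where d: "d > 0" and nz: "\<And>t i. \<bar>t\<bar> < d \<Longrightarrow> i < N \<Longrightarrow> 1 - of_real t * R i $$ (b,a) \<noteq> 0"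
    using exists_radius_one_minus_ne_0[of N "\<lambda>i. R i $$ (b,a)"] by blast
  have pert: "invertible_mat (sample i \<cdot>\<^sub>m cplx E - cplx (A + t \<cdot>\<^sub>m ?U))"
    "tf E (A + t \<cdot>\<^sub>m ?U) B C (sample i) = tf E A B C (sample i) +
      (of_real t / (1 - of_real t * R i $$ (b,a))) \<cdot>\<^sub>m (cplx C * R i * ?U * (R i * cplx B))"
    if t: "\<bar>t\<bar> < d" and i: "i < N" for t i
    using tf_add_A_mat_unit[OF E A B C pencil_invertible[OF i] a b nz[OF t i, unfolded R_def]]
    unfolding R_def by simp_all
  show ?thesis
  proof (rule first_order_condition[where Ap = "\<lambda>t. A + t \<cdot>\<^sub>m ?U" and Bp = "\<lambda>_. B"
        and Cp = "\<lambda>_. C" and \<beta> = "\<lambda>i. R i $$ (b,a)"])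
    show "admissible N \<omega> r ni no E (A + t \<cdot>\<^sub>m ?U) B C" if "\<bar>t\<bar> < d" for t
      using admissible A pert(1)[OF that] unfolding admissible_def sample_def by simp
    show "rfrob_sq (A + t \<cdot>\<^sub>m ?U - A) + rfrob_sq (B - B) + rfrob_sq (C - C) = t\<^sup>2" for t
      using rfrob_sq_add_smult_mat_unit[OF A a b] by simp
    show UC: "cplx C * R i * ?U * (R i * cplx B) \<in> carrier_mat no ni" if "i < N" for i
      using mult_carrier_mat[OF mult_carrier_mat[OF CR_carrier[OF that] mat_unit_carrier]
          RB_carrier[OF that]] .
    show "H i - tf E (A + t \<cdot>\<^sub>m ?U) B C (sample i) = X i -
        (of_real t / (1 - of_real t * R i $$ (b,a))) \<cdot>\<^sub>m (cplx C * R i * ?U * (R i * cplx B))"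
      if t: "\<bar>t\<bar> < d" and i: "i < N" for t i
      using pert(2)[OF t i] by (simp add: X_def diff_add_smult_mat[OF tf_sample_carrier[OF i] UC[OF i]])
    show "cplx C * R (mirror i) * ?U * (R (mirror i) * cplx B) =
        map_mat cnj (cplx C * R i * ?U * (R i * cplx B))" if "i < N" for i
      unfolding cnj_mult_mat3[OF CR_carrier[OF that] mat_unit_carrier RB_carrier[OF that]]
        cnj.mat_hom_mult[OF cplx_C R_carrier[OF that]] cnj.mat_hom_mult[OF R_carrier[OF that] cplx_B]
        R_mirror[OF that] by simp
  qed (use d in simp)
qed

lemma gradient_C:
  assumes D: "D \<in> carrier_mat no r"
  shows "(\<Sum>i<N. of_real (\<rho> i) * frob_inner (X i) (D * (R i * cplx B))) = 0"
proof -
  have "(\<Sum>i<N. of_real (\<rho> i) * frob_inner (X i) (1\<^sub>m no * mat_unit no r p a * (R i * cplx B))) = 0"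
    if "p < no" "a < r" for p a
    using gradient_C_mat_unit[OF that] RB_carrier by simp
  from sum_frob_inner_eq_0_from_mat_units[OF X_carrier one_carrier_mat RB_carrier D this]
  show ?thesis using D by simp
qed

lemma gradient_B:
  assumes D: "D \<in> carrier_mat r ni"
  shows "(\<Sum>i<N. of_real (\<rho> i) * frob_inner (X i) (cplx C * R i * D)) = 0"
proof -
  have "(\<Sum>i<N. of_real (\<rho> i) * frob_inner (X i) (cplx C * R i * mat_unit r ni a q * 1\<^sub>m ni)) = 0"
    if "a < r" "q < ni" for a q
    using gradient_B_mat_unit[OF that] CR_carrier
    by (simp add: right_mult_one_mat[OF mult_carrier_mat[OF CR_carrier mat_unit_carrier]])
  from sum_frob_inner_eq_0_from_mat_units[OF X_carrier CR_carrier one_carrier_mat D this]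
  show ?thesis using D CR_carrier by simp
qed

lemma gradient_A:
  assumes D: "D \<in> carrier_mat r r"
  shows "(\<Sum>i<N. of_real (\<rho> i) * frob_inner (X i) (cplx C * R i * D * (R i * cplx B))) = 0"
  using sum_frob_inner_eq_0_from_mat_units[OF X_carrier CR_carrier RB_carrier D gradient_A_mat_unit]
  by simp

end

section \<open>Interpolation conditions in modal coordinates\<close>

locale lsq_modal = lsq_local_min N r ni no \<omega> \<rho> H E A B C +
  pencil: diag_pencil r "cplx E" "cplx A" S T lam
  for N r ni no \<omega> \<rho> H E A B C S T lam

begin

definition cvec :: "nat \<Rightarrow> complex mat" where
  "cvec k = mat_of_cols no [col (cplx C * T) k]"

definition bvec :: "nat \<Rightarrow> complex mat" where
  "bvec k = mat_of_cols ni [col (transpose_mat (cplx B) * S) k]"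

lemma cvec_carrier: "cvec k \<in> carrier_mat no 1" and bvec_carrier: "bvec k \<in> carrier_mat ni 1"
  unfolding cvec_def bvec_def using B C pencil.S pencil.T by auto

lemma adjoint_cvec_carrier: "mat_adjoint (cvec k) \<in> carrier_mat 1 no"
  using carrier_matD[OF cvec_carrier[of k]] by (intro carrier_matI) auto

lemma index_cvec: "k < r \<Longrightarrow> p < no \<Longrightarrow> cvec k $$ (p,0) = (cplx C * T) $$ (p,k)"
  unfolding cvec_def using C pencil.T by (simp add: mat_of_cols_def)

lemma index_bvec:
  assumes k: "k < r" and q: "q < ni"
  shows "bvec k $$ (q,0) = cnj ((mat_adjoint S * cplx B) $$ (k,q))"
proof -
  have "bvec k $$ (q,0) = (\<Sum>m<r. of_real (B $$ (m,q)) * S $$ (m,k))"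
    unfolding bvec_def using B pencil.S k q
    by (auto simp: mat_of_cols_def scalar_prod_def lessThan_atLeast0 intro!: sum.cong)
  also have "\<dots> = cnj ((mat_adjoint S * cplx B) $$ (k,q))"
    using B pencil.S k q pencil.adjoint_carrier
    by (simp add: index_mult_mat_sum[of _ r r _ ni] mult.commute del: index_mult_mat(1))
  finally show ?thesis .
qed

lemma R_modal: "i < N \<Longrightarrow> R i = T * mat_diag r (\<lambda>j. 1 / (sample i - lam j)) * mat_adjoint S"
  unfolding R_def by (rule pencil.minv_pencil_modal[OF pencil_invertible])

lemma left_eigen_resolvent:
  assumes i: "i < N" and k: "k < r" and p: "p < m"
  shows "mat_unit m r p k * mat_adjoint S * cplx E * (R i * cplx B) =
    (1 / (sample i - lam k)) \<cdot>\<^sub>m (mat_unit m r p k * (mat_adjoint S * cplx B))"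
proof -
  let ?U = "mat_unit m r p k :: complex mat" and ?D = "mat_diag r (\<lambda>j. 1 / (sample i - lam j))"
  have UP: "?U * mat_adjoint S \<in> carrier_mat m r"
    by (rule mult_carrier_mat[OF mat_unit_carrier pencil.adjoint_carrier])
  have "?U * mat_adjoint S * cplx E * R i = ?U * (mat_adjoint S * cplx E * T) * ?D * mat_adjoint S"
    using carrier_matD[OF pencil.S] carrier_matD[OF pencil.T] carrier_matD[OF E]
    by (simp add: R_modal[OF i] assoc_mult_mat_dims)
  also have "\<dots> = (1 / (sample i - lam k)) \<cdot>\<^sub>m (?U * mat_adjoint S)"
    using pencil.adjoint_carrier k p
    by (simp add: pencil.SET mult_mat_unit_diag mult_smult_assoc_mat[of _ m r])
  finally have UPER:
    "?U * mat_adjoint S * cplx E * R i = (1 / (sample i - lam k)) \<cdot>\<^sub>m (?U * mat_adjoint S)" .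
  have "?U * mat_adjoint S * cplx E * (R i * cplx B) = ?U * mat_adjoint S * cplx E * R i * cplx B"
    by (rule assoc_mult_mat[OF mult_carrier_mat[OF UP pencil.E] R_carrier[OF i] cplx_B, symmetric])
  also have "\<dots> = (1 / (sample i - lam k)) \<cdot>\<^sub>m (?U * (mat_adjoint S * cplx B))"
    unfolding UPER using mult_smult_assoc_mat[OF UP cplx_B]
      assoc_mult_mat[OF mat_unit_carrier pencil.adjoint_carrier cplx_B] by simp
  finally show ?thesis .
qed

lemma right_eigen_resolvent:
  assumes i: "i < N" and k: "k < r" and q: "q < m"
  shows "cplx C * R i * (cplx E * T * mat_unit r m k q) =
    (1 / (sample i - lam k)) \<cdot>\<^sub>m (cplx C * T * mat_unit r m k q)"
proof -
  let ?U = "mat_unit r m k q :: complex mat" and ?D = "mat_diag r (\<lambda>j. 1 / (sample i - lam j))"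
  have TU: "T * ?U \<in> carrier_mat r m" by (rule mult_carrier_mat[OF pencil.T mat_unit_carrier])
  have "R i * (cplx E * T * ?U) = T * ?D * (mat_adjoint S * cplx E * T) * ?U"
    using carrier_matD[OF pencil.S] carrier_matD[OF pencil.T] carrier_matD[OF E]
    by (simp add: R_modal[OF i] assoc_mult_mat_dims)
  also have "\<dots> = T * (?D * ?U)"
    using carrier_matD[OF pencil.T] by (simp add: pencil.SET assoc_mult_mat_dims)
  also have "\<dots> = (1 / (sample i - lam k)) \<cdot>\<^sub>m (T * ?U)"
    using k q by (simp add: mult_diag_mat_unit mult_smult_distrib[OF pencil.T mat_unit_carrier])
  finally have RETU: "R i * (cplx E * T * ?U) = (1 / (sample i - lam k)) \<cdot>\<^sub>m (T * ?U)" .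
  have ETU: "cplx E * T * ?U \<in> carrier_mat r m"
    using mult_carrier_mat[OF mult_carrier_mat[OF pencil.E pencil.T] mat_unit_carrier] .
  show ?thesis
    unfolding assoc_mult_mat[OF cplx_C R_carrier[OF i] ETU] RETU
    using mult_smult_distrib[OF cplx_C TU] assoc_mult_mat[OF cplx_C pencil.T mat_unit_carrier] by simp
qed

lemma two_sided_eigen_resolvent:
  assumes i: "i < N" and k: "k < r"
  shows "cplx C * R i * (cplx E * T * mat_unit r r k k * (mat_unit r r k k * mat_adjoint S * cplx E)) *
      (R i * cplx B) =
    (1 / (sample i - lam k))\<^sup>2 \<cdot>\<^sub>m (cplx C * T * mat_unit r r k k * (mat_adjoint S * cplx B))"
proof -
  let ?U = "mat_unit r r k k :: complex mat" and ?\<gamma> = "1 / (sample i - lam k)"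
  have CTU: "cplx C * T * ?U \<in> carrier_mat no r"
    using mult_carrier_mat[OF mult_carrier_mat[OF cplx_C pencil.T] mat_unit_carrier] .
  have UW: "?U * (mat_adjoint S * cplx B) \<in> carrier_mat r ni"
    using mult_carrier_mat[OF mat_unit_carrier mult_carrier_mat[OF pencil.adjoint_carrier cplx_B]] .
  have "cplx C * R i * (cplx E * T * ?U * (?U * mat_adjoint S * cplx E)) * (R i * cplx B) =
      (cplx C * R i * (cplx E * T * ?U)) * (?U * mat_adjoint S * cplx E * (R i * cplx B))"
    using carrier_matD[OF pencil.S] carrier_matD[OF pencil.T] carrier_matD[OF E]
      carrier_matD[OF B] carrier_matD[OF C] carrier_matD[OF R_carrier[OF i]]
    by (simp add: assoc_mult_mat_dims)
  also have "\<dots> = ?\<gamma>\<^sup>2 \<cdot>\<^sub>m (cplx C * T * ?U * (?U * (mat_adjoint S * cplx B)))"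
    unfolding right_eigen_resolvent[OF i k k] left_eigen_resolvent[OF i k k]
    by (simp add: smult_mult_smult_mat[OF CTU UW] power2_eq_square)
  also have "cplx C * T * ?U * (?U * (mat_adjoint S * cplx B)) =
      cplx C * T * (?U * ?U) * (mat_adjoint S * cplx B)"
    using carrier_matD[OF pencil.S] carrier_matD[OF pencil.T] carrier_matD[OF B] carrier_matD[OF C]
    by (simp add: assoc_mult_mat_dims)
  finally show ?thesis by (simp only: mat_unit_mult_mat_unit[OF k])
qed

lemma sum_modal_weights_cnj:
  assumes "(\<Sum>i<N. of_real (\<rho> i) * (1 / (sample i - lam k)) ^ m * cnj (f i)) = 0"
  shows "(\<Sum>i<N. of_real (\<rho> i) / (- cnj (lam k) - sample i) ^ m * f i) = 0"
proof -
  have w: "cnj (sample i - lam k) = - cnj (lam k) - sample i" for i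
    by (simp add: sample_def)
  have "cnj (of_real (\<rho> i) * (1 / (sample i - lam k)) ^ m * cnj (f i)) =
      of_real (\<rho> i) / (- cnj (lam k) - sample i) ^ m * f i" for i
    by (simp only: complex_cnj_mult complex_cnj_power complex_cnj_divide complex_cnj_one w
        complex_cnj_complex_of_real complex_cnj_cnj power_one_over) simp
  then show ?thesis using arg_cong[OF assms, of cnj] by (simp only: cnj_sum complex_cnj_zero)
qed

lemma residual_sum_right:
  assumes k: "k < r" and p: "p < no"
  shows "(\<Sum>i<N. of_real (\<rho> i) / (- cnj (lam k) - sample i) * (X i * bvec k) $$ (p,0)) = 0"
proof -
  let ?U = "mat_unit no r p k :: complex mat" and ?W = "mat_adjoint S * cplx B"
  have W: "?W \<in> carrier_mat r ni" using pencil.adjoint_carrier B by simp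
  have D: "?U * mat_adjoint S * cplx E \<in> carrier_mat no r"
    using mult_carrier_mat[OF mult_carrier_mat[OF mat_unit_carrier pencil.adjoint_carrier] pencil.E] .
  have "frob_inner (X i) (?U * mat_adjoint S * cplx E * (R i * cplx B)) =
      (1 / (sample i - lam k)) ^ 1 * cnj ((X i * bvec k) $$ (p,0))" if i: "i < N" for i
    using frob_inner_smult[OF X_carrier[OF i] mult_carrier_mat[OF mat_unit_carrier W]]
      frob_inner_mat_unit_mult_eq_cnj[OF X_carrier[OF i] W bvec_carrier p k index_bvec[OF k]]
    by (simp add: left_eigen_resolvent[OF i k p])
  then have "(\<Sum>i<N. of_real (\<rho> i) * (1 / (sample i - lam k)) ^ 1 * cnj ((X i * bvec k) $$ (p,0))) = 0"
    using gradient_C[OF D] by (simp add: mult.assoc)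
  from sum_modal_weights_cnj[OF this] show ?thesis by simp
qed

lemma residual_sum_left:
  assumes k: "k < r" and q: "q < ni"
  shows "(\<Sum>i<N. of_real (\<rho> i) / (- cnj (lam k) - sample i) * (mat_adjoint (cvec k) * X i) $$ (0,q)) = 0"
proof -
  let ?U = "mat_unit r ni k q :: complex mat" and ?V = "cplx C * T"
  have V: "?V \<in> carrier_mat no r" using C pencil.T by simp
  have D: "cplx E * T * ?U \<in> carrier_mat r ni"
    using mult_carrier_mat[OF mult_carrier_mat[OF pencil.E pencil.T] mat_unit_carrier] .
  have "frob_inner (X i) (cplx C * R i * (cplx E * T * ?U)) =
      (1 / (sample i - lam k)) ^ 1 * cnj ((mat_adjoint (cvec k) * X i) $$ (0,q))" if i: "i < N" for i
    using frob_inner_smult[OF X_carrier[OF i] mult_carrier_mat[OF V mat_unit_carrier]]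
      frob_inner_mult_mat_unit_eq_cnj[OF X_carrier[OF i] V cvec_carrier k q index_cvec[OF k]]
    by (simp add: right_eigen_resolvent[OF i k q])
  then have "(\<Sum>i<N. of_real (\<rho> i) * (1 / (sample i - lam k)) ^ 1 *
      cnj ((mat_adjoint (cvec k) * X i) $$ (0,q))) = 0"
    using gradient_B[OF D] by (simp add: mult.assoc)
  from sum_modal_weights_cnj[OF this] show ?thesis by simp
qed

lemma residual_sum_deriv:
  assumes k: "k < r"
  shows "(\<Sum>i<N. of_real (\<rho> i) / (- cnj (lam k) - sample i)\<^sup>2 *
    (mat_adjoint (cvec k) * X i * bvec k) $$ (0,0)) = 0"
proof -
  let ?U = "mat_unit r r k k :: complex mat" and ?V = "cplx C * T" and ?W = "mat_adjoint S * cplx B"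
  have V: "?V \<in> carrier_mat no r" using C pencil.T by simp
  have W: "?W \<in> carrier_mat r ni" using pencil.adjoint_carrier B by simp
  have D: "cplx E * T * ?U * (?U * mat_adjoint S * cplx E) \<in> carrier_mat r r"
    using mult_carrier_mat[OF mult_carrier_mat[OF mult_carrier_mat[OF pencil.E pencil.T] mat_unit_carrier]
        mult_carrier_mat[OF mult_carrier_mat[OF mat_unit_carrier pencil.adjoint_carrier] pencil.E]] .
  have "frob_inner (X i)
      (cplx C * R i * (cplx E * T * ?U * (?U * mat_adjoint S * cplx E)) * (R i * cplx B)) =
      (1 / (sample i - lam k)) ^ 2 * cnj ((mat_adjoint (cvec k) * X i * bvec k) $$ (0,0))"
    if i: "i < N" for i
    using frob_inner_smult[OF X_carrier[OF i]
        mult_carrier_mat[OF mult_carrier_mat[OF V mat_unit_carrier] W]]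
      frob_inner_mult_mat_unit_mult_eq_cnj[OF X_carrier[OF i] V W cvec_carrier bvec_carrier k
        index_cvec[OF k] index_bvec[OF k]]
    by (simp add: two_sided_eigen_resolvent[OF i k])
  then have "(\<Sum>i<N. of_real (\<rho> i) * (1 / (sample i - lam k)) ^ 2 *
      cnj ((mat_adjoint (cvec k) * X i * bvec k) $$ (0,0))) = 0"
    using gradient_A[OF D] by (simp add: mult.assoc)
  from sum_modal_weights_cnj[OF this] show ?thesis .
qed

lemma reflected_pole_ne_sample: "k < r \<Longrightarrow> \<forall>i<N. - cnj (lam k) \<noteq> \<i> * complex_of_real (\<omega> i)"
proof (intro allI impI notI)
  fix i assume k: "k < r" and i: "i < N" and eq: "- cnj (lam k) = \<i> * complex_of_real (\<omega> i)"
  have "lam k = sample i" unfolding sample_def using arg_cong[OF eq, of "\<lambda>z. - cnj z"] by simp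
  with pencil.pole_ne[OF pencil_invertible[OF i] k] show False by simp
qed

lemma interpolation_right:
  assumes k: "k < r"
  defines "Ghat \<equiv> Gfun no ni N \<omega> (\<lambda>i. tf E A B C (\<i> * complex_of_real (\<omega> i))) \<rho>"
  shows "Gfun no ni N \<omega> H \<rho> (- cnj (lam k)) * bvec k = Ghat (- cnj (lam k)) * bvec k"
proof -
  have "1\<^sub>m no * Gfun no ni N \<omega> H \<rho> (- cnj (lam k)) * bvec k = 1\<^sub>m no * Ghat (- cnj (lam k)) * bvec k"
    unfolding Ghat_def Gfun_def
  proof (rule weighted_sum_mat_mult_eqI[OF H_carrier tf_at_sample_carrier one_carrier_mat bvec_carrier])
    fix j h :: nat assume j: "j < no" and h: "h < 1"
    have "1\<^sub>m no * X i * bvec k = X i * bvec k" if "i < N" for i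
      using left_mult_one_mat[OF X_carrier[OF that]] by simp
    then show "(\<Sum>i<N. of_real (\<rho> i) / (- cnj (lam k) - \<i> * of_real (\<omega> i)) *
        (1\<^sub>m no * (H i - tf E A B C (\<i> * of_real (\<omega> i))) * bvec k) $$ (j,h)) = 0"
      using residual_sum_right[OF k j] h unfolding H_minus_tf_at_sample sample_def by simp
  qed
  then show ?thesis unfolding Ghat_def using left_mult_one_mat[OF Gfun_carrier] by simp
qed

lemma interpolation_left:
  assumes k: "k < r"
  defines "Ghat \<equiv> Gfun no ni N \<omega> (\<lambda>i. tf E A B C (\<i> * complex_of_real (\<omega> i))) \<rho>"
  shows "mat_adjoint (cvec k) * Gfun no ni N \<omega> H \<rho> (- cnj (lam k)) =
    mat_adjoint (cvec k) * Ghat (- cnj (lam k))"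
proof -
  note c = adjoint_cvec_carrier[of k]
  have "mat_adjoint (cvec k) * Gfun no ni N \<omega> H \<rho> (- cnj (lam k)) * 1\<^sub>m ni =
      mat_adjoint (cvec k) * Ghat (- cnj (lam k)) * 1\<^sub>m ni"
    unfolding Ghat_def Gfun_def
  proof (rule weighted_sum_mat_mult_eqI[OF H_carrier tf_at_sample_carrier c one_carrier_mat])
    fix j h :: nat assume j: "j < 1" and h: "h < ni"
    have "mat_adjoint (cvec k) * X i * 1\<^sub>m ni = mat_adjoint (cvec k) * X i" if "i < N" for i
      using right_mult_one_mat[OF mult_carrier_mat[OF c X_carrier[OF that]]] by simp
    then show "(\<Sum>i<N. of_real (\<rho> i) / (- cnj (lam k) - \<i> * of_real (\<omega> i)) *
        (mat_adjoint (cvec k) * (H i - tf E A B C (\<i> * of_real (\<omega> i))) * 1\<^sub>m ni) $$ (j,h)) = 0"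
      using residual_sum_left[OF k h] j unfolding H_minus_tf_at_sample sample_def by simp
  qed
  then show ?thesis
    unfolding Ghat_def using right_mult_one_mat[OF mult_carrier_mat[OF c Gfun_carrier]] by simp
qed

lemma interpolation_deriv:
  assumes k: "k < r"
  defines "Ghat \<equiv> Gfun no ni N \<omega> (\<lambda>i. tf E A B C (\<i> * complex_of_real (\<omega> i))) \<rho>"
  shows "mat_adjoint (cvec k) * mat_deriv no ni (Gfun no ni N \<omega> H \<rho>) (- cnj (lam k)) * bvec k =
    mat_adjoint (cvec k) * mat_deriv no ni Ghat (- cnj (lam k)) * bvec k"
  unfolding Ghat_def mat_deriv_Gfun[OF reflected_pole_ne_sample[OF k]]
proof (rule weighted_sum_mat_mult_eqI[OF H_carrier tf_at_sample_carrier _ bvec_carrier])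
  show "mat_adjoint (cvec k) \<in> carrier_mat 1 no" by (rule adjoint_cvec_carrier)
  fix j h :: nat assume "j < 1" "h < 1"
  then show "(\<Sum>i<N. - (of_real (\<rho> i) / (- cnj (lam k) - \<i> * of_real (\<omega> i))\<^sup>2) *
      (mat_adjoint (cvec k) * (H i - tf E A B C (\<i> * of_real (\<omega> i))) * bvec k) $$ (j,h)) = 0"
    using residual_sum_deriv[OF k] unfolding H_minus_tf_at_sample sample_def by (simp add: sum_negf)
qed

end

theorem corollary4p2:
  fixes N r ni no :: nat
    and \<omega> \<rho> :: "nat \<Rightarrow> real"
    and H :: "nat \<Rightarrow> complex mat"
    and E A B C :: "real mat"
    and S T :: "complex mat"
    and lam :: "nat \<Rightarrow> complex"
  assumes H_dim: "\<forall>i<N. H i \<in> carrier_mat no ni"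
    and \<omega>_distinct: "inj_on \<omega> {..<N}"
    and conj_closed: "\<forall>k<N. \<exists>j<N. \<omega> j = - \<omega> k \<and> H j = map_mat cnj (H k) \<and> \<rho> j = \<rho> k"
    and \<rho>_pos: "\<forall>i<N. \<rho> i > 0"
    and S_T: "S \<in> carrier_mat r r" "T \<in> carrier_mat r r" "invertible_mat S" "invertible_mat T"
    and SET: "mat_adjoint S * cplx E * T = 1\<^sub>m r"
    and SAT: "mat_adjoint S * cplx A * T = mat r r (\<lambda>(i,j). if i = j then lam i else 0)"
    and poles_distinct: "\<forall>i<r. \<forall>j<r. i \<noteq> j \<longrightarrow> lam i \<noteq> lam j"
    and locmin: "local_minimizer N \<omega> H \<rho> r ni no E A B C"
  shows "\<forall>k<r.
     (let c = mat_of_cols no [col (cplx C * T) k];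
          b = mat_of_cols ni [col (transpose_mat (cplx B) * S) k];
          s0 = - cnj (lam k);
          G = Gfun no ni N \<omega> H \<rho>;
          Ghat = Gfun no ni N \<omega> (\<lambda>i. tf E A B C (\<i> * complex_of_real (\<omega> i))) \<rho>
      in G s0 * b = Ghat s0 * b \<and>
         mat_adjoint c * G s0 = mat_adjoint c * Ghat s0 \<and>
         mat_adjoint c * mat_deriv no ni G s0 * b = mat_adjoint c * mat_deriv no ni Ghat s0 * b)"
proof -
  interpret lsq_local_min N r ni no \<omega> \<rho> H E A B C
    using H_dim \<omega>_distinct conj_closed locmin by unfold_locales
  have "mat r r (\<lambda>(i,j). if i = j then lam i else 0) = mat_diag r lam"
    by (auto simp: mat_diag_def intro!: eq_matI)
  then interpret lsq_modal N r ni no \<omega> \<rho> H E A B C S T lam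
    using E A S_T SET SAT by unfold_locales simp_all
  show ?thesis
    using interpolation_right interpolation_left interpolation_deriv
    unfolding Let_def cvec_def bvec_def by blast
qed

end
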